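(* Let $\alpha\ge\omega$ be a countable ordinal with Cantor normal form $\alpha=\omega^{\beta_1}\cdot c_1+\omega^{\beta_2}\cdot c_2+\dots+\omega^{\beta_l}\cdot c_l$, where $\beta_1>\beta_2>\dots>\beta_l\ge0$ and $1\le c_i<\omega$. Then, regarding $\alpha$ as a linear order, $\mathsf{rk}(\alpha)=\omega\cdot\beta_1+\lfloor\log_2 c_1\rfloor$. In particular, the rank depends only on the leading term of the Cantor normal form.
   Context: An ordinal is regarded as the linear order $(\alpha,\in)$. Let $\mathcal F$ be the class of finite linear orders (language $\{<\}$); countable linear orders are the structures considered; substructures are suborders and $\mathsf{age}(X)$ is the set of finite suborders of $X$. For $A\le B$, $B$ is a prime extension of $A$ if $|B\setminus A|=1$; a realization of $B$ in $X$ (where $A\le X$) is $C\le X$ with $A\le C$ and an order-isomorphism $B\to C$ fixing $A$ pointwise. For $F\in\mathsf{age}(X)$ define by recursion: $\mathsf{rk}_X(F)\ge0$ always; $\mathsf{rk}_X(F)\ge\gamma+1$ iff every prime extension $B\in\mathcal F$ of $F$ has a realization $C$ in $X$ with $\mathsf{rk}_X(C)\ge\gamma$; for limit $\gamma$, $\mathsf{rk}_X(F)\ge\gamma$ iff $\mathsf{rk}_X(F)\ge\delta$ for all $\delta<\gamma$. $\mathsf{rk}_X(F)=\sup\{\gamma:\mathsf{rk}_X(F)\ge\gamma\}$ (or $\infty$ if this holds for all ordinals), and $\mathsf{rk}(X)=\mathsf{rk}_X(\emptyset)$. *)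

theory Defs
  imports Complex_Main "HOL-Library.Countable_Set"
begin

definition osum :: "'a rel \<Rightarrow> 'b rel \<Rightarrow> ('a + 'b) rel" where
  "osum r s = {(Inl a, Inl a') | a a'. (a, a') \<in> r}
            \<union> {(Inr b, Inr b') | b b'. (b, b') \<in> s}
            \<union> {(Inl a, Inr b) | a b. a \<in> Field r \<and> b \<in> Field s}"

text \<open>Ordinal product r * s: s copies of r (lexicographic, s-coordinate major).\<close>
definition oprod :: "'a rel \<Rightarrow> 'b rel \<Rightarrow> ('a \<times> 'b) rel" where
  "oprod r s = {((a, b), (a', b')). a \<in> Field r \<and> a' \<in> Field r \<and> b \<in> Field s \<and> b' \<in> Field s \<and>
                 (((b, b') \<in> s \<and> b \<noteq> b') \<or> (b = b' \<and> (a, a') \<in> r))}"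

text \<open>Ordinal power omega ^ beta: finitely supported functions from Field beta to nat,
  compared at the beta-largest coordinate where they differ.\<close>
definition fin_supp :: "'b rel \<Rightarrow> ('b \<Rightarrow> nat) set" where
  "fin_supp \<beta> = {f. finite {x. f x \<noteq> 0} \<and> (\<forall>x. x \<notin> Field \<beta> \<longrightarrow> f x = 0)}"

definition oexp_omega :: "'b rel \<Rightarrow> ('b \<Rightarrow> nat) rel" where
  "oexp_omega \<beta> = {(f, g). f \<in> fin_supp \<beta> \<and> g \<in> fin_supp \<beta> \<and>
      (f = g \<or> (\<exists>x \<in> Field \<beta>. f x < g x \<and>
                   (\<forall>y \<in> Field \<beta>. (x, y) \<in> \<beta> \<and> y \<noteq> x \<longrightarrow> f y = g y)))}"

definition osum_list :: "'a rel list \<Rightarrow> (nat \<times> 'a) rel" where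
  "osum_list rs = {((j, x), (j', x')). j < length rs \<and> j' < length rs \<and>
                     x \<in> Field (rs ! j) \<and> x' \<in> Field (rs ! j') \<and>
                     (j < j' \<or> (j = j' \<and> (x, x') \<in> rs ! j))}"

text \<open>Cantor normal form expression: the list [(beta_1,c_1),...,(beta_l,c_l)] denotes
  omega^beta_1 * c_1 + ... + omega^beta_l * c_l.\<close>
definition cnf :: "('b rel \<times> nat) list \<Rightarrow> (nat \<times> (('b \<Rightarrow> nat) \<times> nat)) rel" where
  "cnf ts = osum_list (map (\<lambda>(\<beta>, c). oprod (oexp_omega \<beta>) (natLeq_on c)) ts)"

definition osucc :: "'b rel \<Rightarrow> 'b option rel" where
  "osucc r = {(Some a, Some b) | a b. (a, b) \<in> r}
           \<union> {(u, None) | u. u = None \<or> (\<exists>a. u = Some a \<and> a \<in> Field r)}"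

text \<open>A prime extension of the finite suborder F of X: a linear order B on the points
  Some f (f in F) plus one new point None, which restricts to the order of X on F.\<close>
definition prime_ext :: "'a rel \<Rightarrow> 'a set \<Rightarrow> 'a option rel \<Rightarrow> bool" where
  "prime_ext X F B \<longleftrightarrow> Linear_order B \<and> Field B = insert None (Some ` F) \<and>
     (\<forall>f \<in> F. \<forall>g \<in> F. (Some f, Some g) \<in> B \<longleftrightarrow> (f, g) \<in> X)"

definition emb_pt :: "'a \<Rightarrow> 'a option \<Rightarrow> 'a" where
  "emb_pt x u = (case u of None \<Rightarrow> x | Some f \<Rightarrow> f)"

definition realizes :: "'a rel \<Rightarrow> 'a set \<Rightarrow> 'a option rel \<Rightarrow> 'a \<Rightarrow> bool" where
  "realizes X F B x \<longleftrightarrow> x \<in> Field X \<and> x \<notin> F \<and>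
     (\<forall>u \<in> Field B. \<forall>v \<in> Field B. (u, v) \<in> B \<longleftrightarrow> (emb_pt x u, emb_pt x v) \<in> X)"

definition is_pred :: "'b rel \<Rightarrow> 'b \<Rightarrow> 'b \<Rightarrow> bool" where
  "is_pred r b a \<longleftrightarrow> (b, a) \<in> r \<and> b \<noteq> a \<and>
     \<not> (\<exists>c. (b, c) \<in> r \<and> c \<noteq> b \<and> (c, a) \<in> r \<and> c \<noteq> a)"

text \<open>rk_ge_aux X r a F: rk_X(F) \<ge> the order type of the r-initial segment strictly below a,
  by well-founded recursion on a (zero / successor / limit cases).\<close>
definition rk_ge_aux :: "'a rel \<Rightarrow> 'b rel \<Rightarrow> 'b \<Rightarrow> 'a set \<Rightarrow> bool" where
  "rk_ge_aux X r = wfrec (r - Id) (\<lambda>R a F.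
      if (\<forall>b. (b, a) \<notin> r - Id) then True
      else if (\<exists>b. is_pred r b a) then
        (\<forall>B. prime_ext X F B \<longrightarrow>
              (\<exists>x. realizes X F B x \<and> R (THE b. is_pred r b a) (insert x F)))
      else (\<forall>b. (b, a) \<in> r - Id \<longrightarrow> R b F))"

text \<open>rk_ge X F r: rk_X(F) \<ge> otp(r), for a well-order r.\<close>
definition rk_ge :: "'a rel \<Rightarrow> 'a set \<Rightarrow> 'b rel \<Rightarrow> bool" where
  "rk_ge X F r \<longleftrightarrow> rk_ge_aux X (osucc r) None F"

end

theory Submission
  imports Defs
begin

(* For a linear order X and finite F, a prime extension of F is determined by the cut of F
   below its new point, and it is realized exactly by the points of X in the corresponding gap
   of F.  Hence rk(F) >= gamma iff every gap of F has splitting rank >= gamma, where a set G has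
   splitting rank >= gamma + 1 iff some y in G cuts G into two parts of splitting rank >= gamma;
   in particular rk(X) is the splitting rank of X itself.

   Index the ordinals below omega * (beta + 1) as omega * b + k.  The block
   omega^b * 2^k without its least point has splitting rank >= omega * b + k: at successors it
   is halved at its midpoint, at limits it contains the blocks omega^c * 2^n for c < b.
   Conversely, by the same recursion, every set of splitting rank >= omega * b + k contains a
   copy of that block.  With k = floor(log2 c_1) we have 2^k <= c_1 < 2^(k+1): alpha contains
   the block for (beta_1, k), so rk(alpha) >= omega * beta_1 + k, and alpha embeds below a point
   of the block for (beta_1, k + 1), so rk(alpha) >= omega * beta_1 + k + 1 is impossible. *)

unbundle cardinal_syntax

section \<open>Well-orders and strictly increasing maps\<close>

lemma Well_order_Linear_order: "Well_order r \<Longrightarrow> Linear_order r"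
  by (simp add: well_order_on_def)

lemma Well_order_wf: "Well_order r \<Longrightarrow> wf (r - Id)"
  by (simp add: well_order_on_def)

lemma Linear_order_refl: "Linear_order r \<Longrightarrow> x \<in> Field r \<Longrightarrow> (x, x) \<in> r"
  by (simp add: linear_order_on_def partial_order_on_def preorder_on_def refl_on_def)

lemma Linear_order_trans: "Linear_order r \<Longrightarrow> (x, y) \<in> r \<Longrightarrow> (y, z) \<in> r \<Longrightarrow> (x, z) \<in> r"
  unfolding linear_order_on_def partial_order_on_def preorder_on_def by (meson transD)

lemma Linear_order_antisym: "Linear_order r \<Longrightarrow> (x, y) \<in> r \<Longrightarrow> (y, x) \<in> r \<Longrightarrow> x = y"
  unfolding linear_order_on_def partial_order_on_def by (meson antisymD)

lemma Linear_order_total: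
  "Linear_order r \<Longrightarrow> x \<in> Field r \<Longrightarrow> y \<in> Field r \<Longrightarrow> (x, y) \<in> r \<or> (y, x) \<in> r"
  using Linear_order_refl[of r x] by (auto simp: linear_order_on_def total_on_def)

lemma Linear_order_not_le_iff:
  "Linear_order r \<Longrightarrow> x \<in> Field r \<Longrightarrow> y \<in> Field r \<Longrightarrow> x \<noteq> y \<Longrightarrow> (x, y) \<notin> r \<longleftrightarrow> (y, x) \<in> r"
  using Linear_order_total[of r x y] Linear_order_antisym[of r x y] by blast

lemma Linear_order_intro:
  assumes "\<And>x. x \<in> Field r \<Longrightarrow> (x, x) \<in> r"
    and "\<And>x y z. (x, y) \<in> r \<Longrightarrow> (y, z) \<in> r \<Longrightarrow> (x, z) \<in> r"
    and "\<And>x y. (x, y) \<in> r \<Longrightarrow> (y, x) \<in> r \<Longrightarrow> x = y"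
    and "\<And>x y. x \<in> Field r \<Longrightarrow> y \<in> Field r \<Longrightarrow> (x, y) \<in> r \<or> (y, x) \<in> r"
  shows "Linear_order r"
  unfolding linear_order_on_def partial_order_on_def preorder_on_def
proof (intro conjI)
  show "r \<subseteq> Field r \<times> Field r" by (auto simp: Field_def)
  show "refl_on (Field r) r" using assms(1) by (simp add: refl_on_def)
  show "trans r" using assms(2) by (meson transI)
  show "antisym r" using assms(3) by (meson antisymI)
  show "total_on (Field r) r" using assms(4) by (simp add: total_on_def)
qed

lemma is_pred_unique:
  assumes "Linear_order r" "is_pred r b a" "is_pred r c a"
  shows "b = c"
  using assms Linear_order_total[OF assms(1)] unfolding is_pred_def by (metis FieldI1)

lemma The_is_pred: "Linear_order r \<Longrightarrow> is_pred r b a \<Longrightarrow> (THE b. is_pred r b a) = b"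
  using is_pred_unique by (metis the_equality)

definition strict_mono_rel :: "'a rel \<Rightarrow> 'c rel \<Rightarrow> ('a \<Rightarrow> 'c) \<Rightarrow> bool" where
  "strict_mono_rel r r' f \<longleftrightarrow> (\<forall>x\<in>Field r. f x \<in> Field r') \<and>
     (\<forall>x y. (x, y) \<in> r \<longrightarrow> x \<noteq> y \<longrightarrow> (f x, f y) \<in> r' \<and> f x \<noteq> f y)"

lemma strict_mono_rel_inflationary:
  assumes WO: "Well_order r" and f: "strict_mono_rel r r f" and x: "x \<in> Field r"
  shows "(x, f x) \<in> r"
proof (rule ccontr)
  assume "(x, f x) \<notin> r"
  then obtain m where m: "m \<in> Field r" "(m, f m) \<notin> r"
    and least: "\<And>y. (y, m) \<in> r - Id \<Longrightarrow> y \<notin> Field r \<or> (y, f y) \<in> r"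
    using wf_eq_minimal[THEN iffD1, OF Well_order_wf[OF WO], rule_format, of x "{y \<in> Field r. (y, f y) \<notin> r}"] x
    by blast
  have LO: "Linear_order r" using Well_order_Linear_order[OF WO] .
  have fm: "f m \<in> Field r" using f m(1) unfolding strict_mono_rel_def by blast
  have "(f m, m) \<in> r" "f m \<noteq> m" using Linear_order_total[OF LO m(1) fm] Linear_order_refl[OF LO m(1)] m(2) by auto
  then have "(f (f m), f m) \<in> r" "f (f m) \<noteq> f m" using f unfolding strict_mono_rel_def by blast+
  moreover have "(f m, f (f m)) \<in> r" using least[of "f m"] fm \<open>(f m, m) \<in> r\<close> \<open>f m \<noteq> m\<close> by blast
  ultimately show False using Linear_order_antisym[OF LO] by blast
qed

text \<open>Otherwise composing with an isomorphism onto a proper initial segment of \<open>r\<close> gives a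
  strictly increasing self-map of \<open>r\<close> that is not inflationary.\<close>
lemma strict_mono_rel_ordLeq:
  assumes WO: "Well_order r" and WO': "Well_order r'" and f: "strict_mono_rel r r' f"
  shows "r \<le>o r'"
proof (rule ccontr)
  assume "\<not> r \<le>o r'"
  then have "r' <o r" using not_ordLeq_iff_ordLess[OF WO' WO] by blast
  then obtain a g where a: "a \<in> Field r" and g: "iso r' (Restr r (underS r a)) g"
    using ordLess_iff_ordIso_Restr[OF WO WO'] unfolding ordIso_def by blast
  have "Refl r" using WO unfolding well_order_on_def linear_order_on_def partial_order_on_def preorder_on_def by blast
  moreover have "underS r a \<subseteq> Field r" by (auto simp: underS_def intro: FieldI1)
  ultimately have gF: "g ` Field r' = underS r a"
    using iso_Field[OF g] Refl_Field_Restr2 by metis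
  have g_mono: "(g u, g v) \<in> r" if "(u, v) \<in> r'" for u v
    using embed_compat[of r' _ g] g that unfolding iso_def compat_def by blast
  have g_inj: "inj_on g (Field r')" using iso_imp_inj_on[OF g] .
  have "strict_mono_rel r r (g \<circ> f)"
    unfolding strict_mono_rel_def
  proof (rule conjI; intro allI ballI impI)
    fix x assume "x \<in> Field r"
    then have "f x \<in> Field r'" using f unfolding strict_mono_rel_def by blast
    then have "g (f x) \<in> underS r a" using gF by blast
    then show "(g \<circ> f) x \<in> Field r" unfolding underS_def by (auto intro: FieldI1)
  next
    fix x y assume xy: "(x, y) \<in> r" "x \<noteq> y"
    then have fxy: "(f x, f y) \<in> r'" "f x \<noteq> f y" using f unfolding strict_mono_rel_def by blast+
    moreover have "f x \<in> Field r'" "f y \<in> Field r'" using FieldI1[OF fxy(1)] FieldI2[OF fxy(1)] .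
    ultimately show "((g \<circ> f) x, (g \<circ> f) y) \<in> r \<and> (g \<circ> f) x \<noteq> (g \<circ> f) y"
      using g_mono g_inj by (auto dest: inj_onD)
  qed
  from strict_mono_rel_inflationary[OF WO this a] have "(a, g (f a)) \<in> r" by simp
  moreover have "g (f a) \<in> underS r a" using gF f a unfolding strict_mono_rel_def by blast
  ultimately show False using Linear_order_antisym[OF Well_order_Linear_order[OF WO]]
    unfolding underS_def by blast
qed

lemma embed_strict_mono_rel:
  assumes WO: "Well_order r" and e: "embed r r' f"
  shows "strict_mono_rel r r' f"
  unfolding strict_mono_rel_def
proof (rule conjI; intro ballI allI impI)
  fix x y assume xy: "(x, y) \<in> r" "x \<noteq> y"
  have "x \<in> Field r" "y \<in> Field r" using FieldI1[OF xy(1)] FieldI2[OF xy(1)] .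
  then show "(f x, f y) \<in> r' \<and> f x \<noteq> f y"
    using xy embed_compat[OF e] embed_inj_on[OF WO e] unfolding compat_def by (auto dest: inj_onD)
qed (rule embed_in_Field[OF e])

lemma ordLeq_imp_strict_mono_rel:
  assumes "r \<le>o r'"
  obtains f where "strict_mono_rel r r' f"
  using assms embed_strict_mono_rel unfolding ordLeq_def by blast

lemma embed_iff:
  assumes WO: "Well_order r" "Well_order r'" and e: "embed r r' f"
    and x: "x \<in> Field r" and y: "y \<in> Field r"
  shows "(f x, f y) \<in> r' \<longleftrightarrow> (x, y) \<in> r"
proof
  assume fxy: "(f x, f y) \<in> r'"
  show "(x, y) \<in> r"
  proof (rule ccontr)
    assume "(x, y) \<notin> r"
    then have "(y, x) \<in> r" "y \<noteq> x"
      using Linear_order_total[OF Well_order_Linear_order[OF WO(1)] x y]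
        Linear_order_refl[OF Well_order_Linear_order[OF WO(1)] x] by auto
    then have "(f y, f x) \<in> r'" "f y \<noteq> f x"
      using embed_strict_mono_rel[OF WO(1) e] unfolding strict_mono_rel_def by blast+
    then show False using fxy Linear_order_antisym[OF Well_order_Linear_order[OF WO(2)]] by blast
  qed
next
  show "(x, y) \<in> r \<Longrightarrow> (f x, f y) \<in> r'" using embed_compat[OF e] unfolding compat_def by blast
qed

lemma embed_under_image:
  assumes e: "embed r r' f" and x: "x \<in> Field r" and z: "(z, f x) \<in> r'"
  shows "z \<in> f ` Field r"
proof -
  have "z \<in> under r' (f x)" using z by (simp add: under_def)
  also have "under r' (f x) = f ` under r x" using e x unfolding embed_def bij_betw_def by blast
  finally show ?thesis unfolding under_def by (blast intro: FieldI1)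
qed

lemma Linear_order_finite_max:
  assumes LO: "Linear_order \<beta>"
  shows "finite S \<Longrightarrow> S \<noteq> {} \<Longrightarrow> S \<subseteq> Field \<beta> \<Longrightarrow> \<exists>x\<in>S. \<forall>y\<in>S. (y, x) \<in> \<beta>"
proof (induction S rule: finite_ne_induct)
  case (singleton x)
  then show ?case using Linear_order_refl[OF LO] by auto
next
  case (insert x S)
  then obtain m where m: "m \<in> S" "\<forall>y\<in>S. (y, m) \<in> \<beta>" by auto
  have xF: "x \<in> Field \<beta>" and mF: "m \<in> Field \<beta>" using insert.prems m(1) by auto
  show ?case
  proof (cases "(x, m) \<in> \<beta>")
    case True then show ?thesis using m by auto
  next
    case False
    then have "(m, x) \<in> \<beta>" using Linear_order_total[OF LO xF mF] by auto
    then have "\<forall>y\<in>insert x S. (y, x) \<in> \<beta>" using m Linear_order_trans[OF LO] Linear_order_refl[OF LO xF] by blast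
    then show ?thesis by blast
  qed
qed

lemma Field_Restr_Well_order: "Well_order r \<Longrightarrow> A \<subseteq> Field r \<Longrightarrow> Field (Restr r A) = A"
  by (rule Refl_Field_Restr2)
    (simp add: well_order_on_def linear_order_on_def partial_order_on_def preorder_on_def)

lemma ordLeq_infinite_Field:
  assumes "r \<le>o r'" and "infinite (Field r)"
  shows "infinite (Field r')"
proof
  assume "finite (Field r')"
  obtain f where f: "embed r r' f" and WO: "Well_order r" using assms(1) unfolding ordLeq_def by blast
  have "finite (f ` Field r)" using embed_Field[OF f] \<open>finite (Field r')\<close> finite_subset by blast
  then show False using finite_imageD[OF _ embed_inj_on[OF WO f]] assms(2) by blast
qed

lemma ordLeq_Restr_imp_strict_mono:
  assumes "r \<le>o Restr X A"
  obtains e where "\<And>x. x \<in> Field r \<Longrightarrow> e x \<in> A"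
    and "\<And>x y. (x, y) \<in> r \<Longrightarrow> x \<noteq> y \<Longrightarrow> (e x, e y) \<in> X \<and> e x \<noteq> e y"
proof -
  obtain e where "strict_mono_rel r (Restr X A) e" using ordLeq_imp_strict_mono_rel[OF assms] .
  then show ?thesis using that Field_Restr_subset[of X A] unfolding strict_mono_rel_def by blast
qed

lemma strict_mono_rel_below_ordLess:
  assumes WO: "Well_order r" "Well_order r'" and q: "q \<in> Field r'"
    and f: "strict_mono_rel r r' f" and below: "\<And>x. x \<in> Field r \<Longrightarrow> (f x, q) \<in> r' \<and> f x \<noteq> q"
  shows "r <o r'"
proof -
  have "strict_mono_rel r (Restr r' (underS r' q)) f"
    unfolding strict_mono_rel_def
  proof (rule conjI; intro ballI allI impI)
    fix x assume x: "x \<in> Field r"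
    then have "(f x, f x) \<in> Restr r' (underS r' q)"
      using below[OF x] f Linear_order_refl[OF Well_order_Linear_order[OF WO(2)]]
      unfolding strict_mono_rel_def underS_def by auto
    then show "f x \<in> Field (Restr r' (underS r' q))" by (rule FieldI1)
  next
    fix x y assume xy: "(x, y) \<in> r" "x \<noteq> y"
    then show "(f x, f y) \<in> Restr r' (underS r' q) \<and> f x \<noteq> f y"
      using f below[OF FieldI1[OF xy(1)]] below[OF FieldI2[OF xy(1)]]
      unfolding strict_mono_rel_def underS_def by auto
  qed
  then have "r \<le>o Restr r' (underS r' q)"
    by (rule strict_mono_rel_ordLeq[OF WO(1) Well_order_Restr[OF WO(2)]])
  also have "Restr r' (underS r' q) <o r'" using underS_Restr_ordLess[OF WO(2)] q by blast
  finally show ?thesis .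
qed

section \<open>Successor, product and sum of well-orders\<close>

lemma osucc_Some_Some [simp]: "(Some a, Some b) \<in> osucc r \<longleftrightarrow> (a, b) \<in> r"
  and osucc_Some_None [simp]: "(Some a, None) \<in> osucc r \<longleftrightarrow> a \<in> Field r"
  and osucc_None_None [simp]: "(None, None) \<in> osucc r"
  and osucc_None_Some [simp]: "(None, Some b) \<notin> osucc r"
  by (auto simp: osucc_def)

lemma Field_osucc: "Field (osucc r) = insert None (Some ` Field r)"
proof -
  have "insert None (Some ` Field r) \<subseteq> Field (osucc r)"
    using FieldI1[of None None "osucc r"] FieldI1[of "Some _" None "osucc r"] by auto
  moreover have "Field (osucc r) \<subseteq> insert None (Some ` Field r)"
    unfolding osucc_def Field_def by auto
  ultimately show ?thesis by blast
qed

lemma Well_order_osucc: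
  assumes WO: "Well_order r" shows "Well_order (osucc r)"
  unfolding well_order_on_def
proof
  have LO: "Linear_order r" using Well_order_Linear_order[OF WO] .
  show "Linear_order (osucc r)"
  proof (rule Linear_order_intro)
    fix x assume "x \<in> Field (osucc r)"
    then show "(x, x) \<in> osucc r" using Linear_order_refl[OF LO] by (auto simp: Field_osucc)
  next
    fix x y z assume "(x, y) \<in> osucc r" "(y, z) \<in> osucc r"
    then show "(x, z) \<in> osucc r"
      by (cases x; cases y; cases z) (auto dest: Linear_order_trans[OF LO] FieldI1)
  next
    fix x y assume "(x, y) \<in> osucc r" "(y, x) \<in> osucc r"
    then show "x = y" using Linear_order_antisym[OF LO] by (cases x; cases y) auto
  next
    fix x y assume "x \<in> Field (osucc r)" "y \<in> Field (osucc r)"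
    then show "(x, y) \<in> osucc r \<or> (y, x) \<in> osucc r"
      by (auto simp: Field_osucc dest: Linear_order_total[OF LO])
  qed
  have "osucc r - Id \<subseteq> map_prod Some Some ` (r - Id) \<union> range (\<lambda>a. (Some a, None))"
    by (auto simp: osucc_def)
  moreover have "wf (map_prod Some Some ` (r - Id) \<union> range (\<lambda>a. (Some a, None)))"
  proof (rule wf_Un)
    show "wf (map_prod Some Some ` (r - Id))"
      by (rule wf_map_prod_image[OF Well_order_wf[OF WO]]) (simp add: inj_def)
    show "wf (range (\<lambda>a. (Some a, None)))"
      by (rule wf_subset[OF wf_measure[of "\<lambda>u. if u = None then 1 else 0"]]) auto
  qed auto
  ultimately show "wf (osucc r - Id)" by (rule wf_subset[rotated])
qed

lemma oprod_iff: "((a, b), (a', b')) \<in> oprod r s \<longleftrightarrow>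
    a \<in> Field r \<and> a' \<in> Field r \<and> b \<in> Field s \<and> b' \<in> Field s \<and>
    (((b, b') \<in> s \<and> b \<noteq> b') \<or> (b = b' \<and> (a, a') \<in> r))"
  unfolding oprod_def by simp

lemma Field_oprod:
  assumes "Linear_order r" shows "Field (oprod r s) = Field r \<times> Field s"
proof
  show "Field r \<times> Field s \<subseteq> Field (oprod r s)"
  proof
    fix p assume "p \<in> Field r \<times> Field s"
    then have "(p, p) \<in> oprod r s" using Linear_order_refl[OF assms] by (cases p) (simp add: oprod_iff)
    then show "p \<in> Field (oprod r s)" by (rule FieldI1)
  qed
  show "Field (oprod r s) \<subseteq> Field r \<times> Field s" unfolding Field_def oprod_def by auto
qed

lemma oprod_trans:
  assumes LO: "Linear_order r" "Linear_order s"
    and xy: "((a, b), (a', b')) \<in> oprod r s" and yz: "((a', b'), (a'', b'')) \<in> oprod r s"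
  shows "((a, b), (a'', b'')) \<in> oprod r s"
proof (cases "b = b' \<and> b' = b''")
  case True
  then show ?thesis using xy yz Linear_order_trans[OF LO(1)] by (auto simp: oprod_iff)
next
  case False
  have "(b, b') \<in> s" "(b', b'') \<in> s" using xy yz Linear_order_refl[OF LO(2)] by (auto simp: oprod_iff)
  then have "(b, b'') \<in> s" "b \<noteq> b''"
    using False Linear_order_trans[OF LO(2)] Linear_order_antisym[OF LO(2)] by blast+
  then show ?thesis using xy yz by (auto simp: oprod_iff)
qed

lemma Well_order_oprod:
  assumes WO: "Well_order r" "Well_order s" shows "Well_order (oprod r s)"
  unfolding well_order_on_def
proof
  have LO: "Linear_order r" "Linear_order s" using Well_order_Linear_order WO by auto
  show "Linear_order (oprod r s)"
  proof (rule Linear_order_intro)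
    fix x assume "x \<in> Field (oprod r s)"
    then show "(x, x) \<in> oprod r s" using Linear_order_refl[OF LO(1)] by (auto simp: Field_oprod[OF LO(1)] oprod_iff)
  next
    fix x y z assume "(x, y) \<in> oprod r s" "(y, z) \<in> oprod r s"
    then show "(x, z) \<in> oprod r s"
      using oprod_trans[OF LO] by (cases x; cases y; cases z) blast
  next
    fix x y assume "(x, y) \<in> oprod r s" "(y, x) \<in> oprod r s"
    then show "x = y" using Linear_order_antisym[OF LO(1)] Linear_order_antisym[OF LO(2)]
      by (cases x; cases y) (auto simp: oprod_iff)
  next
    fix x y assume "x \<in> Field (oprod r s)" "y \<in> Field (oprod r s)"
    then show "(x, y) \<in> oprod r s \<or> (y, x) \<in> oprod r s"
      using Linear_order_total[OF LO(1)] Linear_order_total[OF LO(2)]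
      by (cases x; cases y) (auto simp: Field_oprod[OF LO(1)] oprod_iff)
  qed
  have "oprod r s - Id \<subseteq> inv_image ((s - Id) <*lex*> (r - Id)) (\<lambda>(a, b). (b, a))"
    unfolding oprod_def by auto
  moreover have "wf (inv_image ((s - Id) <*lex*> (r - Id)) (\<lambda>(a, b). (b, a)))"
    by (intro wf_inv_image wf_lex_prod Well_order_wf WO)
  ultimately show "wf (oprod r s - Id)" by (rule wf_subset[rotated])
qed

lemma osum_Inl_Inl [simp]: "(Inl a, Inl a') \<in> osum r s \<longleftrightarrow> (a, a') \<in> r"
  and osum_Inr_Inr [simp]: "(Inr b, Inr b') \<in> osum r s \<longleftrightarrow> (b, b') \<in> s"
  and osum_Inl_Inr [simp]: "(Inl a, Inr b) \<in> osum r s \<longleftrightarrow> a \<in> Field r \<and> b \<in> Field s"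
  and osum_Inr_Inl [simp]: "(Inr b, Inl a) \<notin> osum r s"
  by (auto simp: osum_def)

lemma Field_osum: "Field (osum r s) = Inl ` Field r \<union> Inr ` Field s"
proof -
  have "Inl a \<in> Field (osum r s)" if a: "a \<in> Field r" for a
  proof -
    obtain a' where "(a, a') \<in> r \<or> (a', a) \<in> r" using a unfolding Field_def by blast
    then have "(Inl a, Inl a') \<in> osum r s \<or> (Inl a', Inl a) \<in> osum r s" by simp
    then show ?thesis by (metis FieldI1 FieldI2)
  qed
  moreover have "Inr b \<in> Field (osum r s)" if b: "b \<in> Field s" for b
  proof -
    obtain b' where "(b, b') \<in> s \<or> (b', b) \<in> s" using b unfolding Field_def by blast
    then have "(Inr b, Inr b') \<in> osum r s \<or> (Inr b', Inr b) \<in> osum r s" by simp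
    then show ?thesis by (metis FieldI1 FieldI2)
  qed
  moreover have "Field (osum r s) \<subseteq> Inl ` Field r \<union> Inr ` Field s"
    unfolding osum_def Field_def by auto
  ultimately show ?thesis by blast
qed

lemma Well_order_osum:
  assumes WO: "Well_order r" "Well_order s" shows "Well_order (osum r s)"
  unfolding well_order_on_def
proof
  have LO: "Linear_order r" "Linear_order s" using Well_order_Linear_order WO by auto
  show "Linear_order (osum r s)"
  proof (rule Linear_order_intro)
    fix x assume "x \<in> Field (osum r s)"
    then show "(x, x) \<in> osum r s"
      using Linear_order_refl[OF LO(1)] Linear_order_refl[OF LO(2)] by (auto simp: Field_osum)
  next
    fix x y z assume "(x, y) \<in> osum r s" "(y, z) \<in> osum r s"
    then show "(x, z) \<in> osum r s"
      by (cases x; cases y; cases z) (auto dest: Linear_order_trans[OF LO(1)] Linear_order_trans[OF LO(2)] FieldI1 FieldI2)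
  next
    fix x y assume "(x, y) \<in> osum r s" "(y, x) \<in> osum r s"
    then show "x = y" using Linear_order_antisym[OF LO(1)] Linear_order_antisym[OF LO(2)]
      by (cases x; cases y) auto
  next
    fix x y assume "x \<in> Field (osum r s)" "y \<in> Field (osum r s)"
    then show "(x, y) \<in> osum r s \<or> (y, x) \<in> osum r s"
      by (auto simp: Field_osum dest: Linear_order_total[OF LO(1)] Linear_order_total[OF LO(2)])
  qed
  let ?T = "map_prod Inl Inl ` (r - Id) \<union> map_prod Inr Inr ` (s - Id)"
  have "wf ?T"
  proof (rule wf_Un)
    show "wf (map_prod Inl Inl ` (r - Id))"
      by (rule wf_map_prod_image[OF Well_order_wf[OF WO(1)]]) (simp add: inj_def)
    show "wf (map_prod Inr Inr ` (s - Id))"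
      by (rule wf_map_prod_image[OF Well_order_wf[OF WO(2)]]) (simp add: inj_def)
  qed auto
  moreover have "osum r s - Id \<subseteq> inv_image (less_than <*lex*> ?T) (\<lambda>x. (case x of Inl _ \<Rightarrow> 0 | Inr _ \<Rightarrow> 1, x))"
    by (auto simp: osum_def)
  ultimately show "wf (osum r s - Id)"
    by (rule wf_subset[OF wf_inv_image[OF wf_lex_prod[OF wf_less_than]]])
qed

lemma strict_mono_rel_osucc:
  assumes e: "strict_mono_rel r r' e" and top: "m \<in> Field r'" "\<And>x. x \<in> Field r \<Longrightarrow> (e x, m) \<in> r' \<and> e x \<noteq> m"
  shows "strict_mono_rel (osucc r) r' (case_option m e)"
  unfolding strict_mono_rel_def
proof (rule conjI; intro ballI allI impI)
  fix u assume "u \<in> Field (osucc r)"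
  then show "case_option m e u \<in> Field r'" using e top(1) by (auto simp: Field_osucc strict_mono_rel_def)
next
  fix u v assume "(u, v) \<in> osucc r" "u \<noteq> v"
  then show "(case_option m e u, case_option m e v) \<in> r' \<and> case_option m e u \<noteq> case_option m e v"
    using e top(2) by (cases u; cases v) (auto simp: strict_mono_rel_def)
qed

lemma osucc_ordLeq_osucc:
  assumes "r \<le>o r'" shows "osucc r \<le>o osucc r'"
proof -
  obtain e where e: "embed r r' e" and WO: "Well_order r" "Well_order r'"
    using assms unfolding ordLeq_def by blast
  then have "strict_mono_rel r (osucc r') (Some \<circ> e)"
    using embed_strict_mono_rel[OF WO(1) e] by (auto simp: strict_mono_rel_def Field_osucc)
  then have "strict_mono_rel (osucc r) (osucc r') (case_option None (Some \<circ> e))"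
    using embed_in_Field[OF e] by (intro strict_mono_rel_osucc) (auto simp: Field_osucc)
  then show ?thesis by (rule strict_mono_rel_ordLeq[OF Well_order_osucc[OF WO(1)] Well_order_osucc[OF WO(2)]])
qed

text \<open>The image of an initial segment embedding is downward closed, so any point outside it
  can serve as the image of the new top element.\<close>
lemma ordLess_imp_osucc_ordLeq:
  assumes "r <o r'" shows "osucc r \<le>o r'"
proof -
  obtain e where e: "embed r r' e" and nb: "\<not> bij_betw e (Field r) (Field r')"
    and WO: "Well_order r" "Well_order r'"
    using assms unfolding ordLess_def embedS_def by blast
  have "e ` Field r \<noteq> Field r'"
    using nb embed_inj_on[OF WO(1) e] unfolding bij_betw_def by blast
  then obtain m where m: "m \<in> Field r'" "m \<notin> e ` Field r" using embed_Field[OF e] by blast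
  have "(e x, m) \<in> r' \<and> e x \<noteq> m" if "x \<in> Field r" for x
    using embed_under_image[OF e that, of m] m Linear_order_total[OF Well_order_Linear_order[OF WO(2)]
        embed_in_Field[OF e that] m(1)] that by blast
  then have "strict_mono_rel (osucc r) r' (case_option m e)"
    using embed_strict_mono_rel[OF WO(1) e] m(1) by (intro strict_mono_rel_osucc)
  then show ?thesis by (rule strict_mono_rel_ordLeq[OF Well_order_osucc[OF WO(1)] WO(2)])
qed

section \<open>Recursion along a well-order\<close>

definition ord_rec :: "'b rel \<Rightarrow> (('x \<Rightarrow> bool) \<Rightarrow> 'x \<Rightarrow> bool) \<Rightarrow> 'b \<Rightarrow> 'x \<Rightarrow> bool" where
  "ord_rec r S = wfrec (r - Id) (\<lambda>R a x.
      if \<forall>b. (b, a) \<notin> r - Id then True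
      else if \<exists>b. is_pred r b a then S (R (THE b. is_pred r b a)) x
      else \<forall>b. (b, a) \<in> r - Id \<longrightarrow> R b x)"

lemma rk_ge_aux_eq_ord_rec:
  "rk_ge_aux X r = ord_rec r (\<lambda>P F. \<forall>B. prime_ext X F B \<longrightarrow> (\<exists>x. realizes X F B x \<and> P (insert x F)))"
  unfolding rk_ge_aux_def ord_rec_def ..

lemma ord_rec_unfold:
  fixes r :: "'b rel" and S :: "('x \<Rightarrow> bool) \<Rightarrow> 'x \<Rightarrow> bool"
  assumes WO: "Well_order r"
  shows "ord_rec r S a x = (if \<forall>b. (b, a) \<notin> r - Id then True
      else if \<exists>b. is_pred r b a then S (ord_rec r S (THE b. is_pred r b a)) x
      else \<forall>b. (b, a) \<in> r - Id \<longrightarrow> ord_rec r S b x)"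
proof -
  define F where "F = (\<lambda>R a x. if \<forall>b. (b, a) \<notin> r - Id then True
      else if \<exists>b. is_pred r b a then S (R (THE b. is_pred r b a)) x
      else \<forall>b. (b, a) \<in> r - Id \<longrightarrow> R b x)"
  have "adm_wf (r - Id) F"
    unfolding adm_wf_def
  proof (intro allI impI)
    fix f g :: "'b \<Rightarrow> 'x \<Rightarrow> bool" and a
    assume agree: "\<forall>b. (b, a) \<in> r - Id \<longrightarrow> f b = g b"
    show "F f a = F g a"
    proof (cases "\<exists>b. is_pred r b a")
      case True
      then obtain b where b: "is_pred r b a" by blast
      then have "f (THE b. is_pred r b a) = g (THE b. is_pred r b a)"
        using agree The_is_pred[OF Well_order_Linear_order[OF WO] b] unfolding is_pred_def by auto
      then show ?thesis using True unfolding F_def by simp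
    qed (use agree in \<open>simp add: F_def\<close>)
  qed
  moreover have "ord_rec r S = wfrec (r - Id) F" unfolding ord_rec_def F_def ..
  ultimately have "ord_rec r S a = F (ord_rec r S) a"
    using wfrec_fixpoint[OF Well_order_wf[OF WO]] by metis
  then show ?thesis by (simp add: F_def)
qed

lemma ord_rec_succ:
  assumes WO: "Well_order r" and b: "is_pred r b a"
  shows "ord_rec r S a x = S (ord_rec r S b) x"
proof -
  have "(b, a) \<in> r - Id" using b unfolding is_pred_def by auto
  then show ?thesis using b The_is_pred[OF Well_order_Linear_order[OF WO] b]
    by (subst ord_rec_unfold[OF WO]) auto
qed

lemma ord_rec_limit:
  assumes WO: "Well_order r" and "\<nexists>b. is_pred r b a"
  shows "ord_rec r S a x = (\<forall>b. (b, a) \<in> r - Id \<longrightarrow> ord_rec r S b x)"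
  using assms(2) by (subst ord_rec_unfold[OF WO]) auto

lemma embed_below_iff:
  assumes WO: "Well_order r" "Well_order r'" and f: "embed r r' f" and a: "a \<in> Field r"
  shows "(c, f a) \<in> r' - Id \<longleftrightarrow> (\<exists>b. (b, a) \<in> r - Id \<and> c = f b)"
proof
  assume c: "(c, f a) \<in> r' - Id"
  then obtain b where b: "b \<in> Field r" "c = f b" using embed_under_image[OF f a] by blast
  then show "\<exists>b. (b, a) \<in> r - Id \<and> c = f b" using c embed_iff[OF WO f b(1) a] by auto
next
  assume "\<exists>b. (b, a) \<in> r - Id \<and> c = f b"
  then show "(c, f a) \<in> r' - Id" using embed_strict_mono_rel[OF WO(1) f] unfolding strict_mono_rel_def by auto
qed

lemma embed_is_pred_iff:
  assumes WO: "Well_order r" "Well_order r'" and f: "embed r r' f" and a: "a \<in> Field r"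
  shows "is_pred r' c (f a) \<longleftrightarrow> (\<exists>b. is_pred r b a \<and> c = f b)"
proof -
  have strict: "(f b, f d) \<in> r' - Id \<longleftrightarrow> (b, d) \<in> r - Id" if "b \<in> Field r" "d \<in> Field r" for b d
    using embed_iff[OF WO f that] embed_inj_on[OF WO(1) f] that by (auto dest: inj_onD)
  have pred: "is_pred s b a \<longleftrightarrow> (b, a) \<in> s - Id \<and> (\<nexists>d. (b, d) \<in> s - Id \<and> (d, a) \<in> s - Id)" for s :: "'c rel" and a b
    unfolding is_pred_def by blast
  show ?thesis
  proof
    assume "is_pred r' c (f a)"
    then obtain b where b: "(b, a) \<in> r - Id" "c = f b" and none: "\<nexists>d'. (c, d') \<in> r' - Id \<and> (d', f a) \<in> r' - Id"
      unfolding pred embed_below_iff[OF WO f a] by blast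
    have "\<nexists>d. (b, d) \<in> r - Id \<and> (d, a) \<in> r - Id"
    proof
      assume "\<exists>d. (b, d) \<in> r - Id \<and> (d, a) \<in> r - Id"
      then obtain d where d: "(b, d) \<in> r - Id" "(d, a) \<in> r - Id" by blast
      then have "(c, f d) \<in> r' - Id" "(f d, f a) \<in> r' - Id"
        using strict[of b d] strict[of d a] b(2) a FieldI1[of b d r] FieldI1[of d a r] by auto
      then show False using none by blast
    qed
    then show "\<exists>b. is_pred r b a \<and> c = f b" using b unfolding pred by blast
  next
    assume "\<exists>b. is_pred r b a \<and> c = f b"
    then obtain b where b: "(b, a) \<in> r - Id" "c = f b" and none: "\<nexists>d. (b, d) \<in> r - Id \<and> (d, a) \<in> r - Id"
      unfolding pred by blast
    have "\<nexists>d'. (c, d') \<in> r' - Id \<and> (d', f a) \<in> r' - Id"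
    proof
      assume "\<exists>d'. (c, d') \<in> r' - Id \<and> (d', f a) \<in> r' - Id"
      then obtain d d' where d: "(c, d') \<in> r' - Id" "(d, a) \<in> r - Id" "d' = f d"
        using embed_below_iff[OF WO f a] by blast
      then have "(b, d) \<in> r - Id" using strict[of b d] b FieldI1[of b a r] FieldI1[of d a r] by auto
      then show False using none d(2) by blast
    qed
    then show "is_pred r' c (f a)" unfolding pred using b embed_below_iff[OF WO f a] by blast
  qed
qed

lemma ord_rec_embed:
  assumes WO: "Well_order r" "Well_order r'" and f: "embed r r' f"
  shows "a \<in> Field r \<Longrightarrow> ord_rec r S a = ord_rec r' S (f a)"
proof (induction a rule: wf_induct_rule[OF Well_order_wf[OF WO(1)]])
  case (1 a)
  show ?case
  proof (cases "\<exists>b. is_pred r b a")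
    case True
    then obtain b where b: "is_pred r b a" by blast
    then have "(b, a) \<in> r - Id" "b \<in> Field r" unfolding is_pred_def by (auto intro: FieldI1)
    then have IH: "ord_rec r S b = ord_rec r' S (f b)" by (rule "1.IH")
    have "is_pred r' (f b) (f a)" using embed_is_pred_iff[OF WO f "1.prems"] b by blast
    then show ?thesis by (simp add: fun_eq_iff ord_rec_succ[OF WO(1) b] ord_rec_succ[OF WO(2)] IH)
  next
    case False
    then have no_pred: "\<nexists>c. is_pred r' c (f a)" using embed_is_pred_iff[OF WO f "1.prems"] by blast
    have IH: "ord_rec r S b = ord_rec r' S (f b)" if "(b, a) \<in> r - Id" for b
      using "1.IH"[OF that] that by (auto intro: FieldI1)
    show ?thesis
    proof
      fix x
      have "ord_rec r S a x = (\<forall>b. (b, a) \<in> r - Id \<longrightarrow> ord_rec r' S (f b) x)"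
        unfolding ord_rec_limit[OF WO(1) False] using IH by auto
      also have "\<dots> = (\<forall>c. (c, f a) \<in> r' - Id \<longrightarrow> ord_rec r' S c x)"
        unfolding embed_below_iff[OF WO f "1.prems"] by blast
      also have "\<dots> = ord_rec r' S (f a) x" by (rule ord_rec_limit[OF WO(2) no_pred, symmetric])
      finally show "ord_rec r S a x = ord_rec r' S (f a) x" .
    qed
  qed
qed

section \<open>Splitting rank\<close>

definition part_below :: "'a rel \<Rightarrow> 'a set \<Rightarrow> 'a \<Rightarrow> 'a set" where
  "part_below X G y = {z \<in> G. (z, y) \<in> X \<and> z \<noteq> y}"

definition part_above :: "'a rel \<Rightarrow> 'a set \<Rightarrow> 'a \<Rightarrow> 'a set" where
  "part_above X G y = {z \<in> G. (y, z) \<in> X \<and> z \<noteq> y}"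

definition split_rk_ge :: "'a rel \<Rightarrow> 'b rel \<Rightarrow> 'b \<Rightarrow> 'a set \<Rightarrow> bool" where
  "split_rk_ge X r = ord_rec r (\<lambda>P G. \<exists>y\<in>G. P (part_below X G y) \<and> P (part_above X G y))"

lemma split_rk_ge_succ:
  "Well_order r \<Longrightarrow> is_pred r b a \<Longrightarrow>
    split_rk_ge X r a G \<longleftrightarrow> (\<exists>y\<in>G. split_rk_ge X r b (part_below X G y) \<and> split_rk_ge X r b (part_above X G y))"
  unfolding split_rk_ge_def by (rule ord_rec_succ)

lemma split_rk_ge_limit:
  "Well_order r \<Longrightarrow> \<nexists>b. is_pred r b a \<Longrightarrow> split_rk_ge X r a G \<longleftrightarrow> (\<forall>b. (b, a) \<in> r - Id \<longrightarrow> split_rk_ge X r b G)"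
  unfolding split_rk_ge_def by (rule ord_rec_limit)

lemma split_rk_ge_embed_index:
  "Well_order r \<Longrightarrow> Well_order r' \<Longrightarrow> embed r r' f \<Longrightarrow> a \<in> Field r \<Longrightarrow>
    split_rk_ge X r a G \<longleftrightarrow> split_rk_ge X r' (f a) G"
  unfolding split_rk_ge_def by (simp add: ord_rec_embed)

lemma
  assumes h: "inj_on h G" "h ` G \<subseteq> G'" "\<forall>u\<in>G. \<forall>v\<in>G. (u, v) \<in> X \<longrightarrow> (h u, h v) \<in> Y" and y: "y \<in> G"
  shows image_part_below: "h ` part_below X G y \<subseteq> part_below Y G' (h y)"
    and image_part_above: "h ` part_above X G y \<subseteq> part_above Y G' (h y)"
  using h y by (auto simp: part_below_def part_above_def inj_on_def)

lemma split_rk_ge_embed: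
  assumes WO: "Well_order r"
  shows "split_rk_ge X r a G \<Longrightarrow> inj_on h G \<Longrightarrow> h ` G \<subseteq> G' \<Longrightarrow>
    \<forall>u\<in>G. \<forall>v\<in>G. (u, v) \<in> X \<longrightarrow> (h u, h v) \<in> Y \<Longrightarrow> split_rk_ge Y r a G'"
proof (induction a arbitrary: G G' h rule: wf_induct_rule[OF Well_order_wf[OF WO]])
  case (1 a)
  have sub: "inj_on h (part_below X G y)" "inj_on h (part_above X G y)"
    "\<forall>u\<in>part_below X G y. \<forall>v\<in>part_below X G y. (u, v) \<in> X \<longrightarrow> (h u, h v) \<in> Y"
    "\<forall>u\<in>part_above X G y. \<forall>v\<in>part_above X G y. (u, v) \<in> X \<longrightarrow> (h u, h v) \<in> Y" for y
    using "1.prems"(2,4) by (auto simp: part_below_def part_above_def intro: inj_on_subset)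
  show ?case
  proof (cases "\<exists>b. is_pred r b a")
    case True
    then obtain b where b: "is_pred r b a" by blast
    then have ba: "(b, a) \<in> r - Id" unfolding is_pred_def by auto
    obtain y where y: "y \<in> G" "split_rk_ge X r b (part_below X G y)" "split_rk_ge X r b (part_above X G y)"
      using "1.prems"(1) split_rk_ge_succ[OF WO b, of X G] by blast
    have "split_rk_ge Y r b (part_below Y G' (h y))"
      using "1.IH"[OF ba y(2) sub(1) image_part_below[OF "1.prems"(2-4) y(1)] sub(3)] .
    moreover have "split_rk_ge Y r b (part_above Y G' (h y))"
      using "1.IH"[OF ba y(3) sub(2) image_part_above[OF "1.prems"(2-4) y(1)] sub(4)] .
    ultimately show ?thesis using split_rk_ge_succ[OF WO b, of Y G'] "1.prems"(3) y(1) by blast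
  next
    case False
    have "split_rk_ge Y r c G'" if "(c, a) \<in> r - Id" for c
      using "1.IH"[OF that _ "1.prems"(2-4)] "1.prems"(1) split_rk_ge_limit[OF WO False, of X G] that by blast
    then show ?thesis using split_rk_ge_limit[OF WO False, of Y G'] by blast
  qed
qed

lemma split_rk_ge_mono:
  "Well_order r \<Longrightarrow> split_rk_ge X r a G \<Longrightarrow> G \<subseteq> G' \<Longrightarrow> split_rk_ge X r a G'"
  using split_rk_ge_embed[of r X a G id G' X] by auto

lemma split_rk_ge_antimono:
  assumes WO: "Well_order r"
  shows "split_rk_ge X r a G \<Longrightarrow> (b, a) \<in> r \<Longrightarrow> split_rk_ge X r b G"
proof (induction a arbitrary: b G rule: wf_induct_rule[OF Well_order_wf[OF WO]])
  case (1 a)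
  show ?case
  proof (cases "b = a")
    case False
    then have ba: "(b, a) \<in> r - Id" using "1.prems"(2) by simp
    show ?thesis
    proof (cases "\<exists>c. is_pred r c a")
      case True
      then obtain c where c: "is_pred r c a" by blast
      then have ca: "(c, a) \<in> r - Id" unfolding is_pred_def by auto
      obtain y where y: "y \<in> G" "split_rk_ge X r c (part_below X G y)"
        using "1.prems"(1) split_rk_ge_succ[OF WO c, of X G] by blast
      have "(b, c) \<in> r"
        using c ba Linear_order_total[OF Well_order_Linear_order[OF WO], of b c] FieldI1[of b a r] FieldI1[of c a r]
        unfolding is_pred_def by auto
      then have "split_rk_ge X r b (part_below X G y)" using "1.IH"[OF ca y(2)] by blast
      then show ?thesis using split_rk_ge_mono[OF WO] by (auto simp: part_below_def)
    next
      case False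
      then show ?thesis using "1.prems"(1) split_rk_ge_limit[OF WO False, of X G] ba by blast
    qed
  qed (use "1.prems" in simp)
qed

section \<open>Cuts, gaps and the rank of a linear order\<close>

definition is_cut :: "'a rel \<Rightarrow> 'a set \<Rightarrow> 'a set \<Rightarrow> bool" where
  "is_cut X F L \<longleftrightarrow> L \<subseteq> F \<and> (\<forall>f\<in>L. \<forall>g\<in>F. (g, f) \<in> X \<longrightarrow> g \<in> L)"

definition gap :: "'a rel \<Rightarrow> 'a set \<Rightarrow> 'a set \<Rightarrow> 'a set" where
  "gap X F L = {y \<in> Field X. y \<notin> F \<and> (\<forall>f\<in>F. (f, y) \<in> X \<longleftrightarrow> f \<in> L)}"

definition cut_of :: "'a set \<Rightarrow> 'a option rel \<Rightarrow> 'a set" where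
  "cut_of F B = {f \<in> F. (Some f, None) \<in> B}"

definition prime_ext_of_cut :: "'a rel \<Rightarrow> 'a set \<Rightarrow> 'a set \<Rightarrow> 'a option rel" where
  "prime_ext_of_cut X F L = {(Some f, Some g) | f g. f \<in> F \<and> g \<in> F \<and> (f, g) \<in> X}
     \<union> {(Some f, None) | f. f \<in> L} \<union> {(None, Some g) | g. g \<in> F \<and> g \<notin> L} \<union> {(None, None)}"

lemma is_cut_cut_of:
  assumes "prime_ext X F B" shows "is_cut X F (cut_of F B)"
proof -
  have "Linear_order B" and "\<forall>f\<in>F. \<forall>g\<in>F. (Some f, Some g) \<in> B \<longleftrightarrow> (f, g) \<in> X"
    using assms unfolding prime_ext_def by auto
  then show ?thesis unfolding is_cut_def cut_of_def by (blast dest: Linear_order_trans)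
qed

lemma realizes_iff_gap:
  assumes LX: "Linear_order X" and B: "prime_ext X F B"
  shows "realizes X F B y \<longleftrightarrow> y \<in> gap X F (cut_of F B)"
proof -
  have LB: "Linear_order B" and FB: "Field B = insert None (Some ` F)"
    and on_F: "\<And>f g. f \<in> F \<Longrightarrow> g \<in> F \<Longrightarrow> (Some f, Some g) \<in> B \<longleftrightarrow> (f, g) \<in> X"
    using B unfolding prime_ext_def by auto
  show ?thesis
  proof
    assume "realizes X F B y"
    then show "y \<in> gap X F (cut_of F B)"
      unfolding realizes_def gap_def cut_of_def by (auto simp: FB emb_pt_def)
  next
    assume "y \<in> gap X F (cut_of F B)"
    then have y: "y \<in> Field X" "y \<notin> F" and below: "\<And>f. f \<in> F \<Longrightarrow> (Some f, None) \<in> B \<longleftrightarrow> (f, y) \<in> X"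
      unfolding gap_def cut_of_def by auto
    have above: "(None, Some g) \<in> B \<longleftrightarrow> (y, g) \<in> X" if g: "g \<in> F" for g
    proof -
      have "g \<in> Field X" using on_F[OF g g] Linear_order_refl[OF LB] FB g FieldI1[of g g X] by auto
      then have "(y, g) \<in> X \<longleftrightarrow> (g, y) \<notin> X"
        using Linear_order_total[OF LX y(1)] Linear_order_antisym[OF LX, of y g] y(2) g by blast
      moreover have "(None, Some g) \<in> B \<longleftrightarrow> (Some g, None) \<notin> B"
        using Linear_order_total[OF LB, of None "Some g"] Linear_order_antisym[OF LB, of None "Some g"] FB g
        by auto
      ultimately show ?thesis using below[OF g] by blast
    qed
    have "(u, v) \<in> B \<longleftrightarrow> (emb_pt y u, emb_pt y v) \<in> X" if "u \<in> Field B" "v \<in> Field B" for u v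
      using that on_F below above Linear_order_refl[OF LB, of None] Linear_order_refl[OF LX y(1)]
      by (cases u; cases v) (auto simp: FB emb_pt_def)
    then show "realizes X F B y" using y unfolding realizes_def by blast
  qed
qed

lemma cut_of_prime_ext_of_cut: "L \<subseteq> F \<Longrightarrow> cut_of F (prime_ext_of_cut X F L) = L"
  unfolding cut_of_def prime_ext_of_cut_def by auto

lemma prime_ext_of_cut_Some_Some [simp]:
    "(Some f, Some g) \<in> prime_ext_of_cut X F L \<longleftrightarrow> f \<in> F \<and> g \<in> F \<and> (f, g) \<in> X"
  and prime_ext_of_cut_Some_None [simp]: "(Some f, None) \<in> prime_ext_of_cut X F L \<longleftrightarrow> f \<in> L"
  and prime_ext_of_cut_None_Some [simp]: "(None, Some g) \<in> prime_ext_of_cut X F L \<longleftrightarrow> g \<in> F \<and> g \<notin> L"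
  and prime_ext_of_cut_None_None [simp]: "(None, None) \<in> prime_ext_of_cut X F L"
  unfolding prime_ext_of_cut_def by auto

lemma prime_ext_prime_ext_of_cut:
  assumes FX: "F \<subseteq> Field X" and LX: "Linear_order X" and L: "is_cut X F L"
  shows "prime_ext X F (prime_ext_of_cut X F L)"
proof -
  let ?B = "prime_ext_of_cut X F L"
  have LF: "L \<subseteq> F" and down: "\<And>f g. f \<in> L \<Longrightarrow> g \<in> F \<Longrightarrow> (g, f) \<in> X \<Longrightarrow> g \<in> L"
    using L unfolding is_cut_def by auto
  have refl: "(u, u) \<in> ?B" if "u \<in> insert None (Some ` F)" for u
    using that FX Linear_order_refl[OF LX] by auto
  have FB: "Field ?B = insert None (Some ` F)"
  proof
    show "insert None (Some ` F) \<subseteq> Field ?B" using FieldI1[OF refl] by blast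
    show "Field ?B \<subseteq> insert None (Some ` F)"
      using LF unfolding prime_ext_of_cut_def Field_def by auto
  qed
  have total: "(f, g) \<in> X \<or> (g, f) \<in> X" if "f \<in> F" "g \<in> F" for f g
    using Linear_order_total[OF LX] FX that by blast
  have "Linear_order ?B"
  proof (rule Linear_order_intro)
    fix u v w assume uv: "(u, v) \<in> ?B" and vw: "(v, w) \<in> ?B"
    show "(u, w) \<in> ?B"
    proof (cases u; cases v; cases w)
      fix f g h assume "u = Some f" "v = Some g" "w = Some h"
      then show ?thesis using uv vw Linear_order_trans[OF LX] by auto
    next
      fix f g assume "u = Some f" "v = Some g" "w = None"
      then show ?thesis using uv vw down by auto
    next
      fix f h assume "u = Some f" "v = None" "w = Some h"
      then show ?thesis using uv vw total[of f h] down[of f h] LF by auto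
    next
      fix g h assume "u = None" "v = Some g" "w = Some h"
      then show ?thesis using uv vw down by auto
    qed (use uv vw in auto)
  next
    fix u v assume "(u, v) \<in> ?B" "(v, u) \<in> ?B"
    then show "u = v" using Linear_order_antisym[OF LX] by (cases u; cases v) auto
  next
    fix u v assume "u \<in> Field ?B" "v \<in> Field ?B"
    then show "(u, v) \<in> ?B \<or> (v, u) \<in> ?B" using total by (cases u; cases v) (auto simp: FB)
  qed (use refl in \<open>simp add: FB\<close>)
  then show ?thesis unfolding prime_ext_def using FB by auto
qed

definition all_gaps_split_rk_ge :: "'a rel \<Rightarrow> 'b rel \<Rightarrow> 'b \<Rightarrow> 'a set \<Rightarrow> bool" where
  "all_gaps_split_rk_ge X r a F \<longleftrightarrow> (\<forall>L. is_cut X F L \<longrightarrow> split_rk_ge X r a (gap X F L))"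

text \<open>Inserting a point \<open>y\<close> of a gap of \<open>F\<close> splits that gap at \<open>y\<close> into two gaps of
  \<open>insert y F\<close>; every other gap of \<open>insert y F\<close> lies inside a gap of \<open>F\<close>.\<close>
context
  fixes X :: "'a rel" and F L :: "'a set" and y :: 'a
  assumes LX: "Linear_order X" and FX: "F \<subseteq> Field X" and L: "is_cut X F L" and y: "y \<in> gap X F L"
begin

lemma gap_memD: "y \<in> Field X" "y \<notin> F" "\<And>f. f \<in> F \<Longrightarrow> (f, y) \<in> X \<longleftrightarrow> f \<in> L" "L \<subseteq> F"
  using y L unfolding gap_def is_cut_def by auto

lemma gap_insert_excl: "gap X (insert y F) L = part_below X (gap X F L) y"
proof -
  have "y \<notin> L" using gap_memD by auto
  then show ?thesis
    unfolding gap_def part_below_def using Linear_order_not_le_iff[OF LX gap_memD(1)] by auto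
qed

lemma gap_insert_incl: "gap X (insert y F) (insert y L) = part_above X (gap X F L) y"
  using gap_memD unfolding gap_def part_above_def by auto

lemma is_cut_insert_excl: "is_cut X (insert y F) L"
  unfolding is_cut_def
proof (intro conjI ballI impI)
  show "L \<subseteq> insert y F" using gap_memD by auto
  fix f g assume f: "f \<in> L" and g: "g \<in> insert y F" and gf: "(g, f) \<in> X"
  show "g \<in> L"
  proof (cases "g = y")
    case True
    have "(f, y) \<in> X" using f gap_memD by auto
    then have "f = y" using gf True Linear_order_antisym[OF LX] by blast
    then show ?thesis using f gap_memD by auto
  next
    case False then show ?thesis using L g gf f unfolding is_cut_def by auto
  qed
qed

lemma is_cut_insert_incl: "is_cut X (insert y F) (insert y L)"
  unfolding is_cut_def
proof (intro conjI ballI impI)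
  show "insert y L \<subseteq> insert y F" using gap_memD by auto
  fix f g assume f: "f \<in> insert y L" and g: "g \<in> insert y F" and gf: "(g, f) \<in> X"
  show "g \<in> insert y L"
  proof (cases "g = y")
    case True then show ?thesis by simp
  next
    case False
    then have gF: "g \<in> F" using g by simp
    show ?thesis
    proof (cases "f = y")
      case True then show ?thesis using gf gF gap_memD by auto
    next
      case False then have "f \<in> L" using f by simp
      then show ?thesis using L gF gf unfolding is_cut_def by auto
    qed
  qed
qed

lemma is_cut_remove: "is_cut X (insert y F) L' \<Longrightarrow> is_cut X F (L' - {y})"
  using gap_memD unfolding is_cut_def by auto

lemma gap_other_cut_side:
  assumes L': "is_cut X (insert y F) L'" and ne: "L' - {y} \<noteq> L" and z: "z \<in> gap X F (L' - {y})"
  shows "(y, z) \<in> X \<longleftrightarrow> y \<in> L'"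
proof -
  have zL: "\<And>f. f \<in> F \<Longrightarrow> (f, z) \<in> X \<longleftrightarrow> f \<in> L' - {y}" using z unfolding gap_def by auto
  have L'F: "L' \<subseteq> insert y F" and dc': "\<And>f g. f \<in> L' \<Longrightarrow> g \<in> insert y F \<Longrightarrow> (g, f) \<in> X \<Longrightarrow> g \<in> L'"
    using L' unfolding is_cut_def by auto
  show ?thesis
proof (cases "y \<in> L'")
  case True
  have "L \<subseteq> L' - {y}"
  proof
    fix f assume f: "f \<in> L"
    then have "f \<in> F" "(f, y) \<in> X" using gap_memD by auto
    then have "f \<in> L'" using dc'[OF True] by auto
    then show "f \<in> L' - {y}" using \<open>f \<in> F\<close> gap_memD by auto
  qed
  then obtain g where g: "g \<in> L' - {y}" "g \<notin> L" using ne by blast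
  then have gF: "g \<in> F" using L'F by auto
  then have "(g, y) \<notin> X" using g gap_memD by auto
  then have "(y, g) \<in> X" using Linear_order_total[OF LX gap_memD(1), of g] gF FX gap_memD(2) by auto
  moreover have "(g, z) \<in> X" using zL gF g by auto
  ultimately show ?thesis using True Linear_order_trans[OF LX] by blast
next
  case False
  have "L' - {y} \<subseteq> L"
  proof
    fix f assume f: "f \<in> L' - {y}"
    then have fF: "f \<in> F" using L'F by auto
    show "f \<in> L"
    proof (rule ccontr)
      assume "f \<notin> L"
      then have "(f, y) \<notin> X" using fF gap_memD by auto
      then have "(y, f) \<in> X" using Linear_order_total[OF LX gap_memD(1), of f] fF FX gap_memD(2) by auto
      then have "y \<in> L'" using dc'[of f y] f by auto
      then show False using False by simp
    qed
  qed
  then obtain g where g: "g \<in> L" "g \<notin> L' - {y}" using ne by blast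
  then have gF: "g \<in> F" using gap_memD by auto
  then have "(g, y) \<in> X" using g gap_memD by auto
  moreover have "(g, z) \<notin> X" using zL gF g by auto
  ultimately have "(y, z) \<notin> X" using Linear_order_trans[OF LX] by blast
  then show ?thesis using False by simp
qed
qed

lemma gap_subset_gap_insert:
  assumes L': "is_cut X (insert y F) L'" and ne: "L' - {y} \<noteq> L"
  shows "gap X F (L' - {y}) \<subseteq> gap X (insert y F) L'"
proof
  fix z assume z: "z \<in> gap X F (L' - {y})"
  then have zF: "z \<in> Field X" "z \<notin> F" and zL: "\<And>f. f \<in> F \<Longrightarrow> (f, z) \<in> X \<longleftrightarrow> f \<in> L' - {y}"
    unfolding gap_def by auto
  have "z \<noteq> y"
  proof
    assume "z = y"
    then have "f \<in> L' - {y} \<longleftrightarrow> f \<in> L" if "f \<in> F" for f using that zL gap_memD by auto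
    then have "L' - {y} = L" using L' gap_memD unfolding is_cut_def by auto
    then show False using ne by simp
  qed
  then show "z \<in> gap X (insert y F) L'"
    using zF zL gap_other_cut_side[OF L' ne z] unfolding gap_def by auto
qed

lemma all_gaps_insert_imp_parts:
  assumes "all_gaps_split_rk_ge X r b (insert y F)"
  shows "split_rk_ge X r b (part_below X (gap X F L) y) \<and> split_rk_ge X r b (part_above X (gap X F L) y)"
  using assms is_cut_insert_excl is_cut_insert_incl gap_insert_excl gap_insert_incl
  unfolding all_gaps_split_rk_ge_def by metis

lemma parts_imp_all_gaps_insert:
  assumes WO: "Well_order r"
    and parts: "split_rk_ge X r b (part_below X (gap X F L) y)" "split_rk_ge X r b (part_above X (gap X F L) y)"
    and gaps: "all_gaps_split_rk_ge X r b F"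
  shows "all_gaps_split_rk_ge X r b (insert y F)"
  unfolding all_gaps_split_rk_ge_def
proof (intro allI impI)
  fix L' assume L': "is_cut X (insert y F) L'"
  show "split_rk_ge X r b (gap X (insert y F) L')"
  proof (cases "L' - {y} = L")
    case True
    then have "L' = L \<or> L' = insert y L" using gap_memD by auto
    then show ?thesis using parts gap_insert_excl gap_insert_incl by auto
  next
    case False
    have "split_rk_ge X r b (gap X F (L' - {y}))"
      using gaps is_cut_remove[OF L'] unfolding all_gaps_split_rk_ge_def by blast
    then show ?thesis using split_rk_ge_mono[OF WO] gap_subset_gap_insert[OF L' False] by blast
  qed
qed

end

lemma rk_ge_aux_succ:
  "Well_order r \<Longrightarrow> is_pred r b a \<Longrightarrow>
    rk_ge_aux X r a F \<longleftrightarrow> (\<forall>B. prime_ext X F B \<longrightarrow> (\<exists>x. realizes X F B x \<and> rk_ge_aux X r b (insert x F)))"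
  unfolding rk_ge_aux_eq_ord_rec by (rule ord_rec_succ)

lemma rk_ge_aux_limit:
  "Well_order r \<Longrightarrow> \<nexists>b. is_pred r b a \<Longrightarrow> rk_ge_aux X r a F \<longleftrightarrow> (\<forall>b. (b, a) \<in> r - Id \<longrightarrow> rk_ge_aux X r b F)"
  unfolding rk_ge_aux_eq_ord_rec by (rule ord_rec_limit)

lemma rk_ge_aux_succ_imp_all_gaps:
  assumes WO: "Well_order r" and LX: "Linear_order X" and FX: "F \<subseteq> Field X" and b: "is_pred r b a"
    and IH: "\<And>x. x \<in> Field X \<Longrightarrow> rk_ge_aux X r b (insert x F) \<Longrightarrow> all_gaps_split_rk_ge X r b (insert x F)"
    and rk: "rk_ge_aux X r a F"
  shows "all_gaps_split_rk_ge X r a F"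
  unfolding all_gaps_split_rk_ge_def
proof (intro allI impI)
  fix L assume L: "is_cut X F L"
  then have "L \<subseteq> F" by (simp add: is_cut_def)
  have B: "prime_ext X F (prime_ext_of_cut X F L)" by (rule prime_ext_prime_ext_of_cut[OF FX LX L])
  then obtain x where x: "realizes X F (prime_ext_of_cut X F L) x" "rk_ge_aux X r b (insert x F)"
    using rk rk_ge_aux_succ[OF WO b, of X F] by blast
  have x_gap: "x \<in> gap X F L"
    using realizes_iff_gap[OF LX B] x(1) cut_of_prime_ext_of_cut[OF \<open>L \<subseteq> F\<close>] by simp
  moreover have "all_gaps_split_rk_ge X r b (insert x F)"
    using IH x unfolding realizes_def by blast
  ultimately have "split_rk_ge X r b (part_below X (gap X F L) x) \<and> split_rk_ge X r b (part_above X (gap X F L) x)"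
    by (rule all_gaps_insert_imp_parts[OF LX FX L])
  then show "split_rk_ge X r a (gap X F L)"
    using x_gap split_rk_ge_succ[OF WO b, of X "gap X F L"] by blast
qed

lemma all_gaps_imp_rk_ge_aux_succ:
  assumes WO: "Well_order r" and LX: "Linear_order X" and FX: "F \<subseteq> Field X" and b: "is_pred r b a"
    and IH: "\<And>x. x \<in> Field X \<Longrightarrow> all_gaps_split_rk_ge X r b (insert x F) \<Longrightarrow> rk_ge_aux X r b (insert x F)"
    and gaps: "all_gaps_split_rk_ge X r a F"
  shows "rk_ge_aux X r a F"
  unfolding rk_ge_aux_succ[OF WO b, of X F]
proof (intro allI impI)
  fix B assume B: "prime_ext X F B"
  define L where "L = cut_of F B"
  have L: "is_cut X F L" unfolding L_def by (rule is_cut_cut_of[OF B])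
  then obtain y where y: "y \<in> gap X F L" "split_rk_ge X r b (part_below X (gap X F L) y)"
    "split_rk_ge X r b (part_above X (gap X F L) y)"
    using gaps split_rk_ge_succ[OF WO b, of X "gap X F L"] unfolding all_gaps_split_rk_ge_def by blast
  have "(b, a) \<in> r" using b unfolding is_pred_def by blast
  then have "all_gaps_split_rk_ge X r b F"
    using gaps split_rk_ge_antimono[OF WO] unfolding all_gaps_split_rk_ge_def by blast
  then have "rk_ge_aux X r b (insert y F)"
    using parts_imp_all_gaps_insert[OF LX FX L y(1) WO y(2,3)] IH y(1) unfolding gap_def by blast
  then show "\<exists>x. realizes X F B x \<and> rk_ge_aux X r b (insert x F)"
    using realizes_iff_gap[OF LX B] y(1) unfolding L_def by blast
qed

theorem rk_ge_aux_iff_all_gaps: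
  assumes WO: "Well_order r" and LX: "Linear_order X"
  shows "F \<subseteq> Field X \<Longrightarrow> rk_ge_aux X r a F \<longleftrightarrow> all_gaps_split_rk_ge X r a F"
proof (induction a arbitrary: F rule: wf_induct_rule[OF Well_order_wf[OF WO]])
  case (1 a)
  show ?case
  proof (cases "\<exists>b. is_pred r b a")
    case True
    then obtain b where b: "is_pred r b a" by blast
    then have "(b, a) \<in> r - Id" unfolding is_pred_def by auto
    then have IH: "rk_ge_aux X r b (insert x F) \<longleftrightarrow> all_gaps_split_rk_ge X r b (insert x F)"
      if "x \<in> Field X" for x
      using "1.IH" "1.prems" that by blast
    show ?thesis
      using rk_ge_aux_succ_imp_all_gaps[OF WO LX "1.prems" b] all_gaps_imp_rk_ge_aux_succ[OF WO LX "1.prems" b] IH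
      by blast
  next
    case False
    have "rk_ge_aux X r a F \<longleftrightarrow> (\<forall>b. (b, a) \<in> r - Id \<longrightarrow> rk_ge_aux X r b F)"
      by (rule rk_ge_aux_limit[OF WO False])
    also have "\<dots> \<longleftrightarrow> (\<forall>b. (b, a) \<in> r - Id \<longrightarrow> all_gaps_split_rk_ge X r b F)"
      using "1.IH" "1.prems" by blast
    also have "\<dots> \<longleftrightarrow> all_gaps_split_rk_ge X r a F"
      using split_rk_ge_limit[OF WO False, of X] unfolding all_gaps_split_rk_ge_def by blast
    finally show ?thesis .
  qed
qed

corollary rk_ge_iff_split_rk_ge:
  assumes "Well_order \<gamma>" "Linear_order X"
  shows "rk_ge X {} \<gamma> \<longleftrightarrow> split_rk_ge X (osucc \<gamma>) None (Field X)"
proof -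
  have "is_cut X {} L \<longleftrightarrow> L = {}" "gap X {} {} = Field X" for L
    unfolding is_cut_def gap_def by auto
  then show ?thesis
    unfolding rk_ge_def rk_ge_aux_iff_all_gaps[OF Well_order_osucc[OF assms(1)] assms(2) empty_subsetI]
      all_gaps_split_rk_ge_def by simp
qed

section \<open>Powers of \<omega>\<close>

lemma fin_supp_zero: "(\<lambda>_. 0) \<in> fin_supp \<beta>" unfolding fin_supp_def by simp

lemma fin_supp_Field: "f \<in> fin_supp \<beta> \<Longrightarrow> f x \<noteq> 0 \<Longrightarrow> x \<in> Field \<beta>"
  unfolding fin_supp_def by auto

lemma fin_supp_finite: "f \<in> fin_supp \<beta> \<Longrightarrow> finite {x. f x \<noteq> 0}"
  unfolding fin_supp_def by auto

lemma fin_suppI: "finite {x. f x \<noteq> 0} \<Longrightarrow> (\<And>x. f x \<noteq> 0 \<Longrightarrow> x \<in> Field \<beta>) \<Longrightarrow> f \<in> fin_supp \<beta>"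
  unfolding fin_supp_def by auto

lemma oexp_omega_iff: "(f, g) \<in> oexp_omega \<beta> \<longleftrightarrow> f \<in> fin_supp \<beta> \<and> g \<in> fin_supp \<beta> \<and>
   (f = g \<or> (\<exists>x\<in>Field \<beta>. f x < g x \<and> (\<forall>y\<in>Field \<beta>. (x, y) \<in> \<beta> \<and> y \<noteq> x \<longrightarrow> f y = g y)))"
  unfolding oexp_omega_def by simp

lemma Field_oexp_omega: "Field (oexp_omega \<beta>) = fin_supp \<beta>"
proof
  show "Field (oexp_omega \<beta>) \<subseteq> fin_supp \<beta>" unfolding Field_def oexp_omega_def by auto
  show "fin_supp \<beta> \<subseteq> Field (oexp_omega \<beta>)"
  proof
    fix f assume "f \<in> fin_supp \<beta>"
    then have "(f, f) \<in> oexp_omega \<beta>" by (simp add: oexp_omega_iff)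
    then show "f \<in> Field (oexp_omega \<beta>)" by (rule FieldI1)
  qed
qed

context
  fixes \<beta> :: "'b rel"
  assumes LO: "Linear_order \<beta>"
begin

lemma fin_supp_greatest_diff:
  assumes f: "f \<in> fin_supp \<beta>" and g: "g \<in> fin_supp \<beta>" and ne: "f \<noteq> g"
  shows "\<exists>x\<in>Field \<beta>. f x \<noteq> g x \<and> (\<forall>y\<in>Field \<beta>. (x, y) \<in> \<beta> \<and> y \<noteq> x \<longrightarrow> f y = g y)"
proof -
  let ?D = "{x. f x \<noteq> g x}"
  have "?D \<subseteq> {x. f x \<noteq> 0} \<union> {x. g x \<noteq> 0}" by auto
  then have fin: "finite ?D" using fin_supp_finite[OF f] fin_supp_finite[OF g] by (meson finite_UnI finite_subset)
  have nem: "?D \<noteq> {}" using ne by auto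
  have sub: "?D \<subseteq> Field \<beta>" using fin_supp_Field[OF f] fin_supp_Field[OF g] by force
  obtain x where x: "x \<in> ?D" "\<forall>y\<in>?D. (y, x) \<in> \<beta>" using Linear_order_finite_max[OF LO fin nem sub] by blast
  have "\<forall>y\<in>Field \<beta>. (x, y) \<in> \<beta> \<and> y \<noteq> x \<longrightarrow> f y = g y"
  proof (intro ballI impI)
    fix y assume "y \<in> Field \<beta>" "(x, y) \<in> \<beta> \<and> y \<noteq> x"
    then show "f y = g y" using x(2) Linear_order_antisym[OF LO, of x y] by auto
  qed
  then show ?thesis using x(1) sub by auto
qed

lemma fin_supp_greatest_nonzero:
  assumes f: "f \<in> fin_supp \<beta>" and ne: "f \<noteq> (\<lambda>_. 0)"
  shows "\<exists>x\<in>Field \<beta>. f x \<noteq> 0 \<and> (\<forall>y. (x, y) \<in> \<beta> \<and> y \<noteq> x \<longrightarrow> f y = 0)"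
proof -
  obtain x where x: "x \<in> Field \<beta>" "f x \<noteq> 0" "\<forall>y\<in>Field \<beta>. (x, y) \<in> \<beta> \<and> y \<noteq> x \<longrightarrow> f y = 0"
    using fin_supp_greatest_diff[OF f fin_supp_zero ne] by auto
  have "\<forall>y. (x, y) \<in> \<beta> \<and> y \<noteq> x \<longrightarrow> f y = 0" using x(3) by (auto intro: FieldI2)
  then show ?thesis using x by blast
qed

lemma oexp_omega_total: "f \<in> fin_supp \<beta> \<Longrightarrow> g \<in> fin_supp \<beta> \<Longrightarrow> (f, g) \<in> oexp_omega \<beta> \<or> (g, f) \<in> oexp_omega \<beta>"
proof -
  assume f: "f \<in> fin_supp \<beta>" and g: "g \<in> fin_supp \<beta>"
  show ?thesis
  proof (cases "f = g")
    case True then show ?thesis using f by (simp add: oexp_omega_iff)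
  next
    case False
    obtain x where x: "x \<in> Field \<beta>" "f x \<noteq> g x" "\<forall>y\<in>Field \<beta>. (x, y) \<in> \<beta> \<and> y \<noteq> x \<longrightarrow> f y = g y"
      using fin_supp_greatest_diff[OF f g False] by blast
    show ?thesis
    proof (cases "f x < g x")
      case True then show ?thesis using x f g unfolding oexp_omega_iff by blast
    next
      case False
      then have "g x < f x" using x(2) by simp
      then have "\<exists>x\<in>Field \<beta>. g x < f x \<and> (\<forall>y\<in>Field \<beta>. (x, y) \<in> \<beta> \<and> y \<noteq> x \<longrightarrow> g y = f y)"
        using x by (intro bexI[of _ x]) auto
      then show ?thesis using f g unfolding oexp_omega_iff by blast
    qed
  qed
qed

lemma oexp_omega_antisym: "(f, g) \<in> oexp_omega \<beta> \<Longrightarrow> (g, f) \<in> oexp_omega \<beta> \<Longrightarrow> f = g"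
proof (rule ccontr)
  assume fg: "(f, g) \<in> oexp_omega \<beta>" and gf: "(g, f) \<in> oexp_omega \<beta>" and ne: "f \<noteq> g"
  obtain x where x: "x \<in> Field \<beta>" "f x < g x" "\<forall>y\<in>Field \<beta>. (x, y) \<in> \<beta> \<and> y \<noteq> x \<longrightarrow> f y = g y"
    using fg ne unfolding oexp_omega_iff by blast
  obtain z where z: "z \<in> Field \<beta>" "g z < f z" "\<forall>y\<in>Field \<beta>. (z, y) \<in> \<beta> \<and> y \<noteq> z \<longrightarrow> g y = f y"
    using gf ne unfolding oexp_omega_iff by metis
  show False
  proof (cases "x = z")
    case True then show ?thesis using x z by auto
  next
    case False
    then have "(x, z) \<in> \<beta> \<or> (z, x) \<in> \<beta>" using Linear_order_total[OF LO x(1) z(1)] by blast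
    then show ?thesis
    proof
      assume "(x, z) \<in> \<beta>" then have "f z = g z" using x(3) z(1) False by auto
      then show False using z(2) by simp
    next
      assume "(z, x) \<in> \<beta>" then have "g x = f x" using z(3) x(1) False by auto
      then show False using x(2) by simp
    qed
  qed
qed

lemma oexp_omega_trans: "(f, g) \<in> oexp_omega \<beta> \<Longrightarrow> (g, h) \<in> oexp_omega \<beta> \<Longrightarrow> (f, h) \<in> oexp_omega \<beta>"
proof -
  assume fg: "(f, g) \<in> oexp_omega \<beta>" and gh: "(g, h) \<in> oexp_omega \<beta>"
  have fs: "f \<in> fin_supp \<beta>" "h \<in> fin_supp \<beta>" using fg gh unfolding oexp_omega_iff by auto
  show ?thesis
  proof (cases "f = g \<or> g = h")
    case True then show ?thesis using fg gh by auto
  next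
    case False
    obtain x where x: "x \<in> Field \<beta>" "f x < g x" "\<forall>y\<in>Field \<beta>. (x, y) \<in> \<beta> \<and> y \<noteq> x \<longrightarrow> f y = g y"
      using fg False unfolding oexp_omega_iff by blast
    obtain z where z: "z \<in> Field \<beta>" "g z < h z" "\<forall>y\<in>Field \<beta>. (z, y) \<in> \<beta> \<and> y \<noteq> z \<longrightarrow> g y = h y"
      using gh False unfolding oexp_omega_iff by blast
    have "\<exists>w\<in>Field \<beta>. f w < h w \<and> (\<forall>y\<in>Field \<beta>. (w, y) \<in> \<beta> \<and> y \<noteq> w \<longrightarrow> f y = h y)"
    proof (cases "x = z")
      case True then show ?thesis using x z by (intro bexI[of _ x]) auto
    next
      case ne: False
      then have "(x, z) \<in> \<beta> \<or> (z, x) \<in> \<beta>" using Linear_order_total[OF LO x(1) z(1)] by blast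
      then show ?thesis
      proof
        assume xz: "(x, z) \<in> \<beta>"
        have "f z = g z" using x(3) z(1) xz ne by auto
        moreover have "\<forall>y\<in>Field \<beta>. (z, y) \<in> \<beta> \<and> y \<noteq> z \<longrightarrow> f y = h y"
        proof (intro ballI impI)
          fix y assume y: "y \<in> Field \<beta>" "(z, y) \<in> \<beta> \<and> y \<noteq> z"
          then have "(x, y) \<in> \<beta>" using xz Linear_order_trans[OF LO] by blast
          moreover have "y \<noteq> x" using y xz ne Linear_order_antisym[OF LO] by blast
          ultimately show "f y = h y" using x(3) z(3) y by auto
        qed
        ultimately show ?thesis using z by (intro bexI[of _ z]) auto
      next
        assume zx: "(z, x) \<in> \<beta>"
        have "g x = h x" using z(3) x(1) zx ne by auto
        moreover have "\<forall>y\<in>Field \<beta>. (x, y) \<in> \<beta> \<and> y \<noteq> x \<longrightarrow> f y = h y"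
        proof (intro ballI impI)
          fix y assume y: "y \<in> Field \<beta>" "(x, y) \<in> \<beta> \<and> y \<noteq> x"
          then have "(z, y) \<in> \<beta>" using zx Linear_order_trans[OF LO] by blast
          moreover have "y \<noteq> z" using y zx ne Linear_order_antisym[OF LO] by blast
          ultimately show "f y = h y" using x(3) z(3) y by auto
        qed
        ultimately show ?thesis using x by (intro bexI[of _ x]) auto
      qed
    qed
    then show ?thesis using fs unfolding oexp_omega_iff by blast
  qed
qed

lemma Linear_order_oexp_omega: "Linear_order (oexp_omega \<beta>)"
proof (rule Linear_order_intro)
  show "\<And>x. x \<in> Field (oexp_omega \<beta>) \<Longrightarrow> (x, x) \<in> oexp_omega \<beta>" by (simp add: Field_oexp_omega oexp_omega_iff)
  show "\<And>x y z. (x, y) \<in> oexp_omega \<beta> \<Longrightarrow> (y, z) \<in> oexp_omega \<beta> \<Longrightarrow> (x, z) \<in> oexp_omega \<beta>" by (rule oexp_omega_trans)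
  show "\<And>x y. (x, y) \<in> oexp_omega \<beta> \<Longrightarrow> (y, x) \<in> oexp_omega \<beta> \<Longrightarrow> x = y" by (rule oexp_omega_antisym)
  show "\<And>x y. x \<in> Field (oexp_omega \<beta>) \<Longrightarrow> y \<in> Field (oexp_omega \<beta>) \<Longrightarrow> (x, y) \<in> oexp_omega \<beta> \<or> (y, x) \<in> oexp_omega \<beta>"
    by (simp add: Field_oexp_omega oexp_omega_total)
qed

lemma oexp_omega_zero_least: "f \<in> fin_supp \<beta> \<Longrightarrow> ((\<lambda>_. 0), f) \<in> oexp_omega \<beta>"
proof -
  assume f: "f \<in> fin_supp \<beta>"
  show ?thesis
  proof (cases "f = (\<lambda>_. 0)")
    case True then show ?thesis using f by (simp add: oexp_omega_iff)
  next
    case False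
    obtain x where "x \<in> Field \<beta>" "f x \<noteq> 0" "\<forall>y. (x, y) \<in> \<beta> \<and> y \<noteq> x \<longrightarrow> f y = 0"
      using fin_supp_greatest_nonzero[OF f False] by blast
    then show ?thesis using f fin_supp_zero unfolding oexp_omega_iff by force
  qed
qed

lemma oexp_omega_below_zero: "(f, (\<lambda>_. 0)) \<in> oexp_omega \<beta> \<Longrightarrow> f = (\<lambda>_. 0)"
proof -
  assume a: "(f, (\<lambda>_. 0)) \<in> oexp_omega \<beta>"
  then have "f \<in> fin_supp \<beta>" by (simp add: oexp_omega_iff)
  then have "((\<lambda>_. 0), f) \<in> oexp_omega \<beta>" by (rule oexp_omega_zero_least)
  then show ?thesis using oexp_omega_antisym a by blast
qed

end

section \<open>Lower bound: splitting the blocks \<open>\<omega>\<^bsup>b\<^esup> \<cdot> 2\<^bsup>k\<^esup>\<close>\<close>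

abbreviation oexp_omega_succ :: "'b rel \<Rightarrow> (('b \<Rightarrow> nat) \<times> nat) rel" where
  "oexp_omega_succ \<beta> \<equiv> oprod (oexp_omega \<beta>) natLeq"

text \<open>The pair \<open>(k, b)\<close> of \<open>rank_index \<beta>\<close> stands for the ordinal \<open>\<omega> \<cdot> b + k\<close>, where \<open>b \<le> \<beta>\<close>.\<close>
abbreviation rank_index :: "'b rel \<Rightarrow> (nat \<times> 'b option) rel" where
  "rank_index \<beta> \<equiv> oprod natLeq (osucc \<beta>)"

definition supp_below :: "'b rel \<Rightarrow> 'b option \<Rightarrow> ('b \<Rightarrow> nat) \<Rightarrow> bool" where
  "supp_below \<beta> b f \<longleftrightarrow> (\<forall>x. f x \<noteq> 0 \<longrightarrow> (Some x, b) \<in> osucc \<beta> \<and> Some x \<noteq> b)"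

text \<open>\<open>block \<beta> b k\<close> is \<open>\<omega>\<^bsup>b\<^esup> \<cdot> 2\<^bsup>k\<^esup>\<close> without its least element, inside \<open>\<omega>\<^bsup>\<beta>\<^esup> \<cdot> \<omega>\<close>.
  Removing the least element makes the halving exact: \<open>2\<^bsup>k+1\<^esup> - 1 = 2 (2\<^bsup>k\<^esup> - 1) + 1\<close>.\<close>
definition block :: "'b rel \<Rightarrow> 'b option \<Rightarrow> nat \<Rightarrow> (('b \<Rightarrow> nat) \<times> nat) set" where
  "block \<beta> b k = {(f, m). f \<in> fin_supp \<beta> \<and> supp_below \<beta> b f \<and> m < 2 ^ k \<and> (f, m) \<noteq> ((\<lambda>_. 0), 0)}"

lemma natLeq_iff: "(x, y) \<in> natLeq \<longleftrightarrow> x \<le> y"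
  by (simp add: natLeq_def)

lemma oexp_omega_succ_iff: "((f, m), (f', m')) \<in> oexp_omega_succ \<beta> \<longleftrightarrow>
    f \<in> fin_supp \<beta> \<and> f' \<in> fin_supp \<beta> \<and> (m < m' \<or> (m = m' \<and> (f, f') \<in> oexp_omega \<beta>))"
  by (auto simp: oprod_iff Field_oexp_omega natLeq_iff Field_natLeq)

lemma Field_oexp_omega_succ: "Linear_order \<beta> \<Longrightarrow> Field (oexp_omega_succ \<beta>) = fin_supp \<beta> \<times> UNIV"
  using Field_oprod[OF Linear_order_oexp_omega, of \<beta> natLeq] Field_natLeq by (simp add: Field_oexp_omega)

lemma rank_index_iff: "((n, b), (n', b')) \<in> rank_index \<beta> \<longleftrightarrow> b \<in> Field (osucc \<beta>) \<and> b' \<in> Field (osucc \<beta>) \<and>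
    (((b, b') \<in> osucc \<beta> \<and> b \<noteq> b') \<or> (b = b' \<and> n \<le> n'))"
  by (auto simp: oprod_iff natLeq_iff Field_natLeq)

lemma Field_rank_index: "Field (rank_index \<beta>) = UNIV \<times> Field (osucc \<beta>)"
  using Field_oprod[OF natLeq_Linear_order] Field_natLeq by simp

lemma Well_order_rank_index: "Well_order \<beta> \<Longrightarrow> Well_order (rank_index \<beta>)"
  by (rule Well_order_oprod[OF natLeq_Well_order Well_order_osucc])

lemma rank_index_is_pred:
  assumes WO: "Well_order \<beta>" and b: "b \<in> Field (osucc \<beta>)"
  shows "is_pred (rank_index \<beta>) (k, b) (Suc k, b)"
proof -
  have "b' = b" if "(b, b') \<in> osucc \<beta>" "(b', b) \<in> osucc \<beta>" for b'
    using that Linear_order_antisym[OF Well_order_Linear_order[OF Well_order_osucc[OF WO]]] by blast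
  then show ?thesis using b unfolding is_pred_def by (auto simp: rank_index_iff)
qed

lemma rank_index_no_pred:
  assumes b: "b \<in> Field (osucc \<beta>)"
  shows "\<nexists>p. is_pred (rank_index \<beta>) p (0, b)"
proof
  assume "\<exists>p. is_pred (rank_index \<beta>) p (0, b)"
  then obtain n b' where p: "is_pred (rank_index \<beta>) (n, b') (0, b)" by auto
  then have "(b', b) \<in> osucc \<beta>" "b' \<noteq> b" "b' \<in> Field (osucc \<beta>)"
    unfolding is_pred_def by (auto simp: rank_index_iff)
  then have "((n, b'), (Suc n, b')) \<in> rank_index \<beta>" "((Suc n, b'), (0, b)) \<in> rank_index \<beta>"
    using b by (auto simp: rank_index_iff)
  then show False using p unfolding is_pred_def by fastforce
qed

lemma below_rank_index_zero:
  assumes "(q, (0, b)) \<in> rank_index \<beta> - Id"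
  obtains n c where "q = (n, Some c)" "(Some c, b) \<in> osucc \<beta>" "Some c \<noteq> b"
proof -
  obtain n b' where q: "q = (n, b')" by force
  then have "(b', b) \<in> osucc \<beta>" "b' \<noteq> b" using assms by (auto simp: rank_index_iff)
  then show ?thesis using q that by (cases b'; cases b) auto
qed

lemma supp_below_Some: "supp_below \<beta> (Some c) f \<longleftrightarrow> (\<forall>x. f x \<noteq> 0 \<longrightarrow> (x, c) \<in> \<beta> \<and> x \<noteq> c)"
  and supp_below_None: "supp_below \<beta> None f \<longleftrightarrow> (\<forall>x. f x \<noteq> 0 \<longrightarrow> x \<in> Field \<beta>)"
  by (auto simp: supp_below_def)

lemma block_iff: "(f, m) \<in> block \<beta> b k \<longleftrightarrow>
    f \<in> fin_supp \<beta> \<and> supp_below \<beta> b f \<and> m < 2 ^ k \<and> (f, m) \<noteq> ((\<lambda>_. 0), 0)"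
  by (simp add: block_def)

lemma block_subset_part_below:
  "block \<beta> b k \<subseteq> part_below (oexp_omega_succ \<beta>) (block \<beta> b (Suc k)) ((\<lambda>_. 0), 2 ^ k)"
  by (auto simp: block_def part_below_def oexp_omega_succ_iff fin_supp_zero)

lemma shift_block_subset_part_above:
  assumes LO: "Linear_order \<beta>"
  shows "(\<lambda>(f, m). (f, m + 2 ^ k)) ` block \<beta> b k \<subseteq>
    part_above (oexp_omega_succ \<beta>) (block \<beta> b (Suc k)) ((\<lambda>_. 0), 2 ^ k)"
proof
  fix q assume "q \<in> (\<lambda>(f, m). (f, m + 2 ^ k)) ` block \<beta> b k"
  then obtain f m where fm: "(f, m) \<in> block \<beta> b k" "q = (f, m + 2 ^ k)" by auto
  then have f: "f \<in> fin_supp \<beta>" "m = 0 \<Longrightarrow> f \<noteq> (\<lambda>_. 0)" by (auto simp: block_iff)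
  have "(((\<lambda>_. 0), 2 ^ k), q) \<in> oexp_omega_succ \<beta>" "q \<noteq> ((\<lambda>_. 0), 2 ^ k)"
    using f fm(2) oexp_omega_zero_least[OF LO f(1)] fin_supp_zero by (auto simp: oexp_omega_succ_iff)
  moreover have "q \<in> block \<beta> b (Suc k)" using fm by (auto simp: block_iff)
  ultimately show "q \<in> part_above (oexp_omega_succ \<beta>) (block \<beta> b (Suc k)) ((\<lambda>_. 0), 2 ^ k)"
    unfolding part_above_def by blast
qed

lemma fin_supp_upd: "f \<in> fin_supp \<beta> \<Longrightarrow> c \<in> Field \<beta> \<Longrightarrow> f(c := m) \<in> fin_supp \<beta>"
proof (rule fin_suppI)
  assume f: "f \<in> fin_supp \<beta>" and c: "c \<in> Field \<beta>"
  have "{x. (f(c := m)) x \<noteq> 0} \<subseteq> insert c {x. f x \<noteq> 0}" by auto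
  then show "finite {x. (f(c := m)) x \<noteq> 0}" using fin_supp_finite[OF f] finite_subset by blast
  show "\<And>x. (f(c := m)) x \<noteq> 0 \<Longrightarrow> x \<in> Field \<beta>" using c fin_supp_Field[OF f] by (auto split: if_splits)
qed

text \<open>Placing the value \<open>m\<close> on top of the support, at \<open>c\<close>, embeds \<open>\<omega>\<^bsup>c\<^esup> \<cdot> \<omega>\<close> into \<open>\<omega>\<^bsup>c+1\<^esup>\<close>.\<close>
lemma oexp_omega_upd_mono:
  assumes LO: "Linear_order \<beta>" and c: "c \<in> Field \<beta>"
    and f: "f \<in> fin_supp \<beta>" "supp_below \<beta> (Some c) f" and f': "f' \<in> fin_supp \<beta>" "supp_below \<beta> (Some c) f'"
    and less: "((f, m), (f', m')) \<in> oexp_omega_succ \<beta>"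
  shows "(f(c := m), f'(c := m')) \<in> oexp_omega \<beta>"
proof -
  have fs: "f(c := m) \<in> fin_supp \<beta>" "f'(c := m') \<in> fin_supp \<beta>"
    by (simp_all add: fin_supp_upd f(1) f'(1) c)
  have above_c: "f y = 0" "f' y = 0" if "(c, y) \<in> \<beta>" for y
    using that f(2) f'(2) Linear_order_antisym[OF LO, of c y] by (auto simp: supp_below_Some)
  show ?thesis
  proof (cases "m < m'")
    case True
    have "\<forall>y\<in>Field \<beta>. (c, y) \<in> \<beta> \<and> y \<noteq> c \<longrightarrow> (f(c := m)) y = (f'(c := m')) y"
      using above_c by auto
    then show ?thesis using True c fs unfolding oexp_omega_iff by (intro conjI disjI2 bexI[of _ c]) auto
  next
    case False
    then have mm: "m = m'" "(f, f') \<in> oexp_omega \<beta>" using less by (auto simp: oexp_omega_succ_iff)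
    show ?thesis
    proof (cases "f = f'")
      case False
      then obtain x where x: "x \<in> Field \<beta>" "f x < f' x" "\<forall>y\<in>Field \<beta>. (x, y) \<in> \<beta> \<and> y \<noteq> x \<longrightarrow> f y = f' y"
        using mm(2) unfolding oexp_omega_iff by blast
      have "x \<noteq> c" using x(2) f'(2) by (auto simp: supp_below_Some)
      then show ?thesis using x mm(1) fs unfolding oexp_omega_iff by (intro conjI disjI2 bexI[of _ x]) auto
    qed (use mm fs in \<open>simp add: oexp_omega_iff\<close>)
  qed
qed

lemma upd_block_subset_block:
  assumes LO: "Linear_order \<beta>" and c: "(Some c, b) \<in> osucc \<beta>" "Some c \<noteq> b"
  shows "(\<lambda>(f, m). (f(c := m), 0 :: nat)) ` block \<beta> (Some c) n \<subseteq> block \<beta> b 0"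
proof
  fix w assume "w \<in> (\<lambda>(f, m). (f(c := m), 0 :: nat)) ` block \<beta> (Some c) n"
  then obtain f m where fm: "(f, m) \<in> block \<beta> (Some c) n" "w = (f(c := m), 0)" by auto
  then have f: "f \<in> fin_supp \<beta>" "supp_below \<beta> (Some c) f" "(f, m) \<noteq> ((\<lambda>_. 0), 0)"
    by (auto simp: block_iff)
  have cF: "c \<in> Field \<beta>" using c by (cases b) (auto intro: FieldI1)
  have fc: "f c = 0" using f(2) by (auto simp: supp_below_Some)
  have "supp_below \<beta> b (f(c := m))"
    unfolding supp_below_def
  proof (intro allI impI)
    fix x assume x: "(f(c := m)) x \<noteq> 0"
    show "(Some x, b) \<in> osucc \<beta> \<and> Some x \<noteq> b"
    proof (cases "x = c")
      case False
      then have xc: "(x, c) \<in> \<beta>" "x \<noteq> c" using x f(2) by (auto simp: supp_below_Some)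
      then show ?thesis using c Linear_order_trans[OF LO] Linear_order_antisym[OF LO] FieldI1[OF xc(1)]
        by (cases b) auto
    qed (use c in simp)
  qed
  moreover have "f(c := m) \<noteq> (\<lambda>_. 0)"
    using f(3) fc by (metis fun_upd_idem fun_upd_same)
  ultimately show "w \<in> block \<beta> b 0" using fm(2) fin_supp_upd[OF f(1) cF] by (auto simp: block_iff)
qed

lemma inj_on_upd_block: "inj_on (\<lambda>(f, m). (f(c := m), 0 :: nat)) (block \<beta> (Some c) n)"
proof (rule inj_onI, clarify)
  fix f m f' m'
  assume "(f, m) \<in> block \<beta> (Some c) n" "(f', m') \<in> block \<beta> (Some c) n" and eq: "f(c := m) = f'(c := m')"
  then have "f c = 0" "f' c = 0" by (auto simp: block_iff supp_below_Some)
  then show "f = f' \<and> m = m'" using eq by (metis fun_upd_same fun_upd_triv fun_upd_upd)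
qed

theorem split_rk_ge_block:
  assumes WO: "Well_order \<beta>"
  shows "p \<in> Field (rank_index \<beta>) \<Longrightarrow>
    split_rk_ge (oexp_omega_succ \<beta>) (rank_index \<beta>) p (block \<beta> (snd p) (fst p))"
proof (induction p rule: wf_induct_rule[OF Well_order_wf[OF Well_order_rank_index[OF WO]]])
  case (1 p)
  obtain k b where p: "p = (k, b)" by force
  have b: "b \<in> Field (osucc \<beta>)" using "1.prems" p Field_rank_index by auto
  have LO: "Linear_order \<beta>" using Well_order_Linear_order[OF WO] .
  note WR = Well_order_rank_index[OF WO]
  show ?case
  proof (cases k)
    case (Suc k')
    have pred: "is_pred (rank_index \<beta>) (k', b) (Suc k', b)" by (rule rank_index_is_pred[OF WO b])
    then have "((k', b), p) \<in> rank_index \<beta> - Id" using p Suc unfolding is_pred_def by auto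
    then have IH: "split_rk_ge (oexp_omega_succ \<beta>) (rank_index \<beta>) (k', b) (block \<beta> b k')"
      using "1.IH" b by (auto simp: Field_rank_index)
    let ?mid = "((\<lambda>_. 0) :: 'a \<Rightarrow> nat, 2 ^ k' :: nat)"
    have "split_rk_ge (oexp_omega_succ \<beta>) (rank_index \<beta>) (k', b)
        (part_below (oexp_omega_succ \<beta>) (block \<beta> b (Suc k')) ?mid)"
      by (rule split_rk_ge_mono[OF WR IH block_subset_part_below])
    moreover have "split_rk_ge (oexp_omega_succ \<beta>) (rank_index \<beta>) (k', b)
        (part_above (oexp_omega_succ \<beta>) (block \<beta> b (Suc k')) ?mid)"
    proof (rule split_rk_ge_embed[OF WR IH _ shift_block_subset_part_above[OF LO]])
      show "inj_on (\<lambda>(f, m). (f, m + 2 ^ k')) (block \<beta> b k')" by (auto simp: inj_on_def)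
    qed (auto simp: oexp_omega_succ_iff)
    moreover have "?mid \<in> block \<beta> b (Suc k')" by (simp add: block_iff fin_supp_zero supp_below_def)
    ultimately show ?thesis using split_rk_ge_succ[OF WR pred] p Suc by auto
  next
    case 0
    have "split_rk_ge (oexp_omega_succ \<beta>) (rank_index \<beta>) q (block \<beta> b 0)"
      if q: "(q, (0, b)) \<in> rank_index \<beta> - Id" for q
    proof -
      obtain n c where nc: "q = (n, Some c)" "(Some c, b) \<in> osucc \<beta>" "Some c \<noteq> b"
        using below_rank_index_zero[OF q] .
      have c: "c \<in> Field \<beta>" using nc(2) by (cases b) (auto intro: FieldI1)
      have IH: "split_rk_ge (oexp_omega_succ \<beta>) (rank_index \<beta>) q (block \<beta> (Some c) n)"
        using "1.IH"[of q] q p 0 nc(1) c by (auto simp: Field_rank_index Field_osucc)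
      show ?thesis
      proof (rule split_rk_ge_embed[OF WR IH inj_on_upd_block upd_block_subset_block[OF LO nc(2,3)]],
          clarify)
        fix f m f' m'
        assume "(f, m) \<in> block \<beta> (Some c) n" "(f', m') \<in> block \<beta> (Some c) n"
          "((f, m), (f', m')) \<in> oexp_omega_succ \<beta>"
        then show "((f(c := m), 0), (f'(c := m'), 0)) \<in> oexp_omega_succ \<beta>"
          using oexp_omega_upd_mono[OF LO c] fin_supp_upd[OF _ c] by (auto simp: block_iff oexp_omega_succ_iff)
      qed
    qed
    then have "split_rk_ge (oexp_omega_succ \<beta>) (rank_index \<beta>) (0, b) (block \<beta> b 0)"
      using split_rk_ge_limit[OF WR rank_index_no_pred[OF b], of "oexp_omega_succ \<beta>"] by blast
    then show ?thesis using p 0 by simp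
  qed
qed

section \<open>Upper bound: sets of large splitting rank contain blocks\<close>

definition block_order :: "'b rel \<Rightarrow> 'b option \<Rightarrow> nat \<Rightarrow> (('b \<Rightarrow> nat) \<times> nat) rel" where
  "block_order \<beta> b k = Restr (oexp_omega_succ \<beta>) (block \<beta> b k)"

lemma block_order_iff:
  "(u, v) \<in> block_order \<beta> b k \<longleftrightarrow> (u, v) \<in> oexp_omega_succ \<beta> \<and> u \<in> block \<beta> b k \<and> v \<in> block \<beta> b k"
  unfolding block_order_def by auto

lemma below_greatest_nonzero:
  assumes LO: "Linear_order \<beta>" and f: "f \<in> fin_supp \<beta>"
    and c: "c \<in> Field \<beta>" "\<And>y. (c, y) \<in> \<beta> \<Longrightarrow> y \<noteq> c \<Longrightarrow> f y = 0"
    and g: "(g, f) \<in> oexp_omega \<beta>"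
  shows "\<forall>x. g x \<noteq> 0 \<longrightarrow> (x, c) \<in> \<beta>" and "g c \<le> f c"
proof -
  have supp_f: "(x, c) \<in> \<beta>" if fx: "f x \<noteq> 0" for x
  proof (rule ccontr)
    assume xc: "(x, c) \<notin> \<beta>"
    have "(c, x) \<in> \<beta>" using xc Linear_order_total[OF LO fin_supp_Field[OF f fx] c(1)] by blast
    moreover have "x \<noteq> c" using xc Linear_order_refl[OF LO c(1)] by blast
    ultimately have "f x = 0" by (rule c(2))
    then show False using fx by simp
  qed
  have "(\<forall>x. g x \<noteq> 0 \<longrightarrow> (x, c) \<in> \<beta>) \<and> g c \<le> f c"
  proof (cases "g = f")
    case False
    then obtain w where w: "w \<in> Field \<beta>" "g w < f w" "\<forall>y\<in>Field \<beta>. (w, y) \<in> \<beta> \<and> y \<noteq> w \<longrightarrow> g y = f y"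
      and gs: "g \<in> fin_supp \<beta>" using g unfolding oexp_omega_iff by blast
    have wc: "(w, c) \<in> \<beta>" using supp_f[of w] w(2) by simp
    have "(x, c) \<in> \<beta>" if gx: "g x \<noteq> 0" for x
    proof (rule ccontr)
      assume "(x, c) \<notin> \<beta>"
      moreover have xF: "x \<in> Field \<beta>" using fin_supp_Field[OF gs gx] .
      ultimately have "(c, x) \<in> \<beta>" "x \<noteq> c"
        using Linear_order_total[OF LO xF c(1)] Linear_order_refl[OF LO c(1)] by auto
      then have "g x = f x" using w(3) xF wc Linear_order_trans[OF LO] \<open>(x, c) \<notin> \<beta>\<close> by blast
      then show False using gx c(2)[OF \<open>(c, x) \<in> \<beta>\<close> \<open>x \<noteq> c\<close>] by simp
    qed
    moreover have "g c \<le> f c" using w wc c(1) by (cases "w = c") auto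
    ultimately show ?thesis by blast
  qed (use supp_f in auto)
  then show "\<forall>x. g x \<noteq> 0 \<longrightarrow> (x, c) \<in> \<beta>" "g c \<le> f c" by blast+
qed

definition restrict_below :: "'b rel \<Rightarrow> 'b \<Rightarrow> ('b \<Rightarrow> nat) \<Rightarrow> 'b \<Rightarrow> nat" where
  "restrict_below \<beta> c g x = (if (x, c) \<in> \<beta> \<and> x \<noteq> c then g x else 0)"

lemma fin_supp_restrict_below: "g \<in> fin_supp \<beta> \<Longrightarrow> restrict_below \<beta> c g \<in> fin_supp \<beta>"
  unfolding fin_supp_def restrict_below_def by (auto elim: finite_subset[rotated])

lemma supp_below_restrict_below: "supp_below \<beta> (Some c) (restrict_below \<beta> c g)"
  by (simp add: supp_below_Some restrict_below_def)

lemma restrict_below_strict_mono: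
  assumes c: "c \<in> Field \<beta>" and g: "g1 \<in> fin_supp \<beta>" "g2 \<in> fin_supp \<beta>"
    and supp: "\<forall>x. g2 x \<noteq> 0 \<longrightarrow> (x, c) \<in> \<beta>"
    and less: "(g1, g2) \<in> oexp_omega \<beta>" "g1 \<noteq> g2"
  shows "((restrict_below \<beta> c g1, g1 c), (restrict_below \<beta> c g2, g2 c)) \<in> oexp_omega_succ \<beta> \<and>
    (restrict_below \<beta> c g1, g1 c) \<noteq> (restrict_below \<beta> c g2, g2 c)"
proof -
  obtain w where w: "w \<in> Field \<beta>" "g1 w < g2 w" "\<forall>y\<in>Field \<beta>. (w, y) \<in> \<beta> \<and> y \<noteq> w \<longrightarrow> g1 y = g2 y"
    using less unfolding oexp_omega_iff by blast
  have wc: "(w, c) \<in> \<beta>" using supp w(2) by auto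
  have rs: "restrict_below \<beta> c g1 \<in> fin_supp \<beta>" "restrict_below \<beta> c g2 \<in> fin_supp \<beta>"
    by (simp_all add: fin_supp_restrict_below g)
  show ?thesis
  proof (cases "w = c")
    case False
    have "\<forall>y\<in>Field \<beta>. (w, y) \<in> \<beta> \<and> y \<noteq> w \<longrightarrow> restrict_below \<beta> c g1 y = restrict_below \<beta> c g2 y"
      using w(3) unfolding restrict_below_def by auto
    moreover have "restrict_below \<beta> c g1 w < restrict_below \<beta> c g2 w"
      using w(2) wc False unfolding restrict_below_def by auto
    ultimately have "(restrict_below \<beta> c g1, restrict_below \<beta> c g2) \<in> oexp_omega \<beta>"
      using w(1) rs unfolding oexp_omega_iff by blast
    moreover have "g1 c = g2 c" using w(3) wc False c by auto
    ultimately show ?thesis using rs \<open>restrict_below \<beta> c g1 w < restrict_below \<beta> c g2 w\<close>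
      by (auto simp: oexp_omega_succ_iff)
  qed (use w(2) rs in \<open>auto simp: oexp_omega_succ_iff\<close>)
qed

lemma restrict_below_in_block:
  assumes g: "g \<in> fin_supp \<beta>" "g \<noteq> (\<lambda>_. 0)" "\<forall>x. g x \<noteq> 0 \<longrightarrow> (x, c) \<in> \<beta>" and n: "g c < 2 ^ n"
  shows "(restrict_below \<beta> c g, g c) \<in> block \<beta> (Some c) n"
proof -
  obtain x where x: "g x \<noteq> 0" using g(2) by auto
  then have "restrict_below \<beta> c g x \<noteq> 0 \<or> g c \<noteq> 0" using g(3) unfolding restrict_below_def by auto
  then have "(restrict_below \<beta> c g, g c) \<noteq> ((\<lambda>_. 0), 0)" by auto
  then show ?thesis
    using fin_supp_restrict_below[OF g(1)] supp_below_restrict_below n by (simp add: block_iff)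
qed

definition block_glue ::
    "nat \<Rightarrow> (('b \<Rightarrow> nat) \<times> nat \<Rightarrow> 'a) \<Rightarrow> 'a \<Rightarrow> (('b \<Rightarrow> nat) \<times> nat \<Rightarrow> 'a) \<Rightarrow> ('b \<Rightarrow> nat) \<times> nat \<Rightarrow> 'a" where
  "block_glue k e\<^sub>1 y e\<^sub>2 q =
    (if snd q < 2 ^ k then e\<^sub>1 q else if q = ((\<lambda>_. 0), 2 ^ k) then y else e\<^sub>2 (fst q, snd q - 2 ^ k))"

text \<open>The two halves of \<open>block \<beta> b (Suc k)\<close> around its point \<open>(0, 2\<^sup>k)\<close> are copies of
  \<open>block \<beta> b k\<close>; embeddings of them below and above \<open>y\<close> glue to an embedding of the whole.\<close>
lemma block_glue_strict_mono:
  fixes \<beta> :: "'b rel"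
  assumes LO: "Linear_order \<beta>" and LX: "Linear_order X"
    and e1: "\<And>u v. (u, v) \<in> block_order \<beta> b k \<Longrightarrow> u \<noteq> v \<Longrightarrow> (e\<^sub>1 u, e\<^sub>1 v) \<in> X \<and> e\<^sub>1 u \<noteq> e\<^sub>1 v"
    and e2: "\<And>u v. (u, v) \<in> block_order \<beta> b k \<Longrightarrow> u \<noteq> v \<Longrightarrow> (e\<^sub>2 u, e\<^sub>2 v) \<in> X \<and> e\<^sub>2 u \<noteq> e\<^sub>2 v"
    and below_y: "\<And>q. q \<in> block \<beta> b k \<Longrightarrow> (e\<^sub>1 q, y) \<in> X \<and> e\<^sub>1 q \<noteq> y"
    and above_y: "\<And>q. q \<in> block \<beta> b k \<Longrightarrow> (y, e\<^sub>2 q) \<in> X \<and> e\<^sub>2 q \<noteq> y"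
    and u: "u \<in> block \<beta> b (Suc k)" and v: "v \<in> block \<beta> b (Suc k)"
    and uv: "(u, v) \<in> oexp_omega_succ \<beta>" and ne: "u \<noteq> v"
  shows "(block_glue k e\<^sub>1 y e\<^sub>2 u, block_glue k e\<^sub>1 y e\<^sub>2 v) \<in> X \<and> block_glue k e\<^sub>1 y e\<^sub>2 u \<noteq> block_glue k e\<^sub>1 y e\<^sub>2 v"
proof -
  define mid where "mid = ((\<lambda>_. 0) :: 'b \<Rightarrow> nat, 2 ^ k :: nat)"
  define h where "h = block_glue k e\<^sub>1 y e\<^sub>2"
  have h_def': "h q = (if snd q < 2 ^ k then e\<^sub>1 q else if q = mid then y else e\<^sub>2 (fst q, snd q - 2 ^ k))" for q
    unfolding h_def mid_def block_glue_def ..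
  have low: "q \<in> block \<beta> b k" if "q \<in> block \<beta> b (Suc k)" "snd q < 2 ^ k" for q
    using that by (cases q) (auto simp: block_iff)
  have up: "(fst q, snd q - 2 ^ k) \<in> block \<beta> b k" if "q \<in> block \<beta> b (Suc k)" "\<not> snd q < 2 ^ k" "q \<noteq> mid" for q
    using that unfolding mid_def by (cases q) (auto simp: block_iff)
  have ord: "snd u < snd v \<or> (snd u = snd v \<and> (fst u, fst v) \<in> oexp_omega \<beta>)"
    and fs: "fst u \<in> fin_supp \<beta>" "fst v \<in> fin_supp \<beta>"
    using uv by (cases u; cases v; auto simp: oexp_omega_succ_iff)+
  consider (low_low) "snd v < 2 ^ k" | (low_mid) "snd u < 2 ^ k" "v = mid"
    | (low_up) "snd u < 2 ^ k" "\<not> snd v < 2 ^ k" "v \<noteq> mid"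
    | (mid_up) "u = mid" | (up_up) "\<not> snd u < 2 ^ k" "u \<noteq> mid"
    by fastforce
  then have "(h u, h v) \<in> X \<and> h u \<noteq> h v"
  proof cases
    case low_low
    then have "snd u < 2 ^ k" using ord by auto
    then show ?thesis using e1[of u v] uv ne low[OF u] low[OF v low_low] low_low
      unfolding h_def' by (auto simp: block_order_iff)
  next
    case low_mid
    then show ?thesis using below_y[OF low[OF u]] unfolding h_def' mid_def by auto
  next
    case low_up
    then have "h u = e\<^sub>1 u" "h v = e\<^sub>2 (fst v, snd v - 2 ^ k)" unfolding h_def' by auto
    moreover have "(e\<^sub>1 u, y) \<in> X" "e\<^sub>1 u \<noteq> y" "(y, e\<^sub>2 (fst v, snd v - 2 ^ k)) \<in> X"
      using below_y[OF low[OF u]] above_y[OF up[OF v]] low_up by auto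
    ultimately show ?thesis using Linear_order_trans[OF LX] Linear_order_antisym[OF LX] by metis
  next
    case mid_up
    then have "\<not> snd v < 2 ^ k" "v \<noteq> mid" using ord ne unfolding mid_def by auto
    then show ?thesis using above_y[OF up[OF v]] mid_up unfolding h_def' mid_def by auto
  next
    case up_up
    have "\<not> snd v < 2 ^ k" using up_up(1) ord by auto
    moreover have "v \<noteq> mid"
      using up_up ord oexp_omega_below_zero[OF LO] unfolding mid_def
      by (cases u) auto
    moreover have "((fst u, snd u - 2 ^ k), (fst v, snd v - 2 ^ k)) \<in> oexp_omega_succ \<beta>"
      using ord fs up_up calculation by (auto simp: oexp_omega_succ_iff)
    moreover have "(fst u, snd u - 2 ^ k) \<noteq> (fst v, snd v - 2 ^ k)"
      using ne up_up calculation(1) by (cases u; cases v) auto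
    ultimately show ?thesis using e2 up[OF u up_up] up[OF v] up_up unfolding h_def'
      by (auto simp: block_order_iff)
  qed
  then show ?thesis unfolding h_def .
qed

text \<open>Well-foundedness of \<open>\<omega>\<^bsup>\<beta>\<^esup>\<close> is assumed rather than proved; for the leading exponent of
  a Cantor normal form it is inherited from the normal form (\<open>Well_order_oexp_omega_of_cnf\<close>).\<close>
context
  fixes \<beta> :: "'b rel"
  assumes WO: "Well_order \<beta>" and WO_exp: "Well_order (oexp_omega \<beta>)"
begin

lemma Well_order_block_order: "Well_order (block_order \<beta> b k)"
  unfolding block_order_def by (rule Well_order_Restr[OF Well_order_oprod[OF WO_exp natLeq_Well_order]])

lemma Field_block_order: "Field (block_order \<beta> b k) = block \<beta> b k"
proof -
  have "block \<beta> b k \<subseteq> Field (oexp_omega_succ \<beta>)"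
    unfolding Field_oexp_omega_succ[OF Well_order_Linear_order[OF WO]] by (auto simp: block_def)
  then show ?thesis
    unfolding block_order_def by (rule Field_Restr_Well_order[OF Well_order_oprod[OF WO_exp natLeq_Well_order]])
qed

lemma block_order_Suc_ordLeq:
  assumes WX: "Well_order X" and GX: "G \<subseteq> Field X" and y: "y \<in> G"
    and lower: "block_order \<beta> b k \<le>o Restr X (part_below X G y)"
    and upper: "block_order \<beta> b k \<le>o Restr X (part_above X G y)"
  shows "block_order \<beta> b (Suc k) \<le>o Restr X G"
proof -
  obtain e\<^sub>1 where e1F: "\<And>q. q \<in> block \<beta> b k \<Longrightarrow> e\<^sub>1 q \<in> part_below X G y"
    and e1: "\<And>u v. (u, v) \<in> block_order \<beta> b k \<Longrightarrow> u \<noteq> v \<Longrightarrow> (e\<^sub>1 u, e\<^sub>1 v) \<in> X \<and> e\<^sub>1 u \<noteq> e\<^sub>1 v"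
    using ordLeq_Restr_imp_strict_mono[OF lower] unfolding Field_block_order by metis
  obtain e\<^sub>2 where e2F: "\<And>q. q \<in> block \<beta> b k \<Longrightarrow> e\<^sub>2 q \<in> part_above X G y"
    and e2: "\<And>u v. (u, v) \<in> block_order \<beta> b k \<Longrightarrow> u \<noteq> v \<Longrightarrow> (e\<^sub>2 u, e\<^sub>2 v) \<in> X \<and> e\<^sub>2 u \<noteq> e\<^sub>2 v"
    using ordLeq_Restr_imp_strict_mono[OF upper] unfolding Field_block_order by metis
  have "block_glue k e\<^sub>1 y e\<^sub>2 q \<in> G" if "q \<in> block \<beta> b (Suc k)" for q
    using that e1F e2F y unfolding block_glue_def part_below_def part_above_def
    by (cases q) (auto simp: block_iff)
  moreover have "(block_glue k e\<^sub>1 y e\<^sub>2 u, block_glue k e\<^sub>1 y e\<^sub>2 v) \<in> X \<and> block_glue k e\<^sub>1 y e\<^sub>2 u \<noteq> block_glue k e\<^sub>1 y e\<^sub>2 v"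
    if "(u, v) \<in> block_order \<beta> b (Suc k)" "u \<noteq> v" for u v
    using that e1F e2F
    by (intro block_glue_strict_mono[OF Well_order_Linear_order[OF WO] Well_order_Linear_order[OF WX] e1 e2])
      (auto simp: block_order_iff part_below_def part_above_def)
  ultimately have "strict_mono_rel (block_order \<beta> b (Suc k)) (Restr X G) (block_glue k e\<^sub>1 y e\<^sub>2)"
    unfolding strict_mono_rel_def Field_block_order Field_Restr_Well_order[OF WX GX]
    by (auto simp: block_order_iff)
  then show ?thesis
    by (rule strict_mono_rel_ordLeq[OF Well_order_block_order Well_order_Restr[OF WX]])
qed

text \<open>Projecting to \<open>(g restricted below c, g c)\<close> maps the part of \<open>block \<beta> b 0\<close> below
  \<open>(f, 0)\<close> into a proper initial segment of \<open>block \<beta> (Some c) (f c)\<close>, where \<open>c\<close> is the top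
  of the support of \<open>f\<close>.\<close>
lemma block_order_segment_ordLess:
  assumes p: "(f, 0) \<in> block \<beta> b 0"
    and c: "c \<in> Field \<beta>" "\<And>y. (c, y) \<in> \<beta> \<Longrightarrow> y \<noteq> c \<Longrightarrow> f y = 0"
  shows "Restr (block_order \<beta> b 0) (underS (block_order \<beta> b 0) (f, 0)) <o block_order \<beta> (Some c) (f c)"
proof -
  let ?W = "block_order \<beta> b 0" and ?p = "(f, 0 :: nat)"
  have LO: "Linear_order \<beta>" using Well_order_Linear_order[OF WO] .
  have f: "f \<in> fin_supp \<beta>" using p by (simp add: block_iff)
  let ?\<pi> = "\<lambda>q. (restrict_below \<beta> c (fst q), fst q c)"
  have below_p: "\<exists>g. q = (g, 0) \<and> g \<noteq> (\<lambda>_. 0) \<and> (g, f) \<in> oexp_omega \<beta> \<and> g \<in> fin_supp \<beta>"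
    if "q \<in> block \<beta> b 0" "(q, ?p) \<in> oexp_omega_succ \<beta>" for q
    using that by (cases q) (auto simp: block_iff oexp_omega_succ_iff)
  have \<pi>_block: "?\<pi> q \<in> block \<beta> (Some c) (f c)"
    if q: "q \<in> block \<beta> b 0" "(q, ?p) \<in> oexp_omega_succ \<beta>" for q
  proof -
    obtain g where g: "q = (g, 0)" "g \<noteq> (\<lambda>_. 0)" "(g, f) \<in> oexp_omega \<beta>" "g \<in> fin_supp \<beta>"
      using below_p[OF q] by blast
    have "g c < 2 ^ f c"
      using below_greatest_nonzero(2)[OF LO f(1) c g(3)] less_exp[of "f c"] by linarith
    then show ?thesis
      using restrict_below_in_block[OF g(4,2) below_greatest_nonzero(1)[OF LO f(1) c g(3)]] g(1) by simp
  qed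
  have \<pi>_mono: "(?\<pi> q1, ?\<pi> q2) \<in> block_order \<beta> (Some c) (f c) \<and> ?\<pi> q1 \<noteq> ?\<pi> q2"
    if q: "(q1, q2) \<in> ?W" "q1 \<noteq> q2" and q2: "(q2, ?p) \<in> oexp_omega_succ \<beta>" for q1 q2
  proof -
    have q12: "q1 \<in> block \<beta> b 0" "q2 \<in> block \<beta> b 0" "(q1, q2) \<in> oexp_omega_succ \<beta>"
      using q(1) by (auto simp: block_order_iff)
    have "(q1, ?p) \<in> oexp_omega_succ \<beta>"
      using Linear_order_trans[OF Well_order_Linear_order[OF Well_order_oprod[OF WO_exp natLeq_Well_order]]] q12(3) q2
      by blast
    then obtain g1 where g1: "q1 = (g1, 0)" "g1 \<in> fin_supp \<beta>" using below_p[OF q12(1)] by blast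
    obtain g2 where g2: "q2 = (g2, 0)" "(g2, f) \<in> oexp_omega \<beta>" "g2 \<in> fin_supp \<beta>"
      using below_p[OF q12(2) q2] by blast
    have "(g1, g2) \<in> oexp_omega \<beta>" "g1 \<noteq> g2" using q12(3) q(2) g1 g2 by (auto simp: oexp_omega_succ_iff)
    then have "(?\<pi> q1, ?\<pi> q2) \<in> oexp_omega_succ \<beta> \<and> ?\<pi> q1 \<noteq> ?\<pi> q2"
      using restrict_below_strict_mono[OF c(1) g1(2) g2(3) below_greatest_nonzero(1)[OF LO f(1) c g2(2)]]
        g1(1) g2(1) by simp
    then show ?thesis
      using \<pi>_block[OF q12(1) \<open>(q1, ?p) \<in> oexp_omega_succ \<beta>\<close>] \<pi>_block[OF q12(2) q2]
      by (simp add: block_order_iff)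
  qed
  have p_refl: "(?p, ?p) \<in> oexp_omega_succ \<beta>" using f by (simp add: oexp_omega_succ_iff oexp_omega_iff)
  have seg: "underS ?W ?p \<subseteq> Field ?W" by (auto simp: underS_def intro: FieldI1)
  have "strict_mono_rel (Restr ?W (underS ?W ?p)) (block_order \<beta> (Some c) (f c)) ?\<pi>"
    unfolding strict_mono_rel_def Field_Restr_Well_order[OF Well_order_block_order seg]
  proof (rule conjI; intro ballI allI impI)
    fix q assume "q \<in> underS ?W ?p"
    then show "?\<pi> q \<in> Field (block_order \<beta> (Some c) (f c))"
      using \<pi>_block by (auto simp: Field_block_order underS_def block_order_iff)
  next
    fix q1 q2 assume "(q1, q2) \<in> Restr ?W (underS ?W ?p)" "q1 \<noteq> q2"
    then show "(?\<pi> q1, ?\<pi> q2) \<in> block_order \<beta> (Some c) (f c) \<and> ?\<pi> q1 \<noteq> ?\<pi> q2"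
      using \<pi>_mono[of q1 q2] by (simp add: underS_def block_order_iff)
  qed
  moreover have "(?\<pi> q, ?\<pi> ?p) \<in> block_order \<beta> (Some c) (f c) \<and> ?\<pi> q \<noteq> ?\<pi> ?p"
    if "q \<in> Field (Restr ?W (underS ?W ?p))" for q
    using that \<pi>_mono[of q ?p] p_refl unfolding Field_Restr_Well_order[OF Well_order_block_order seg]
    by (simp add: underS_def)
  moreover have "?\<pi> ?p \<in> Field (block_order \<beta> (Some c) (f c))"
    using \<pi>_block[OF p p_refl] by (simp add: Field_block_order)
  ultimately show ?thesis
    by (intro strict_mono_rel_below_ordLess[OF Well_order_Restr[OF Well_order_block_order] Well_order_block_order])
qed

lemma block_order_limit_ordLeq:
  assumes WX: "Well_order X" and GX: "G \<subseteq> Field X"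
    and IH: "\<And>c n. (Some c, b) \<in> osucc \<beta> \<Longrightarrow> Some c \<noteq> b \<Longrightarrow> block_order \<beta> (Some c) n \<le>o Restr X G"
  shows "block_order \<beta> b 0 \<le>o Restr X G"
proof (rule ccontr)
  let ?W = "block_order \<beta> b 0"
  assume "\<not> ?W \<le>o Restr X G"
  then have "Restr X G <o ?W"
    using not_ordLeq_iff_ordLess[OF Well_order_Restr[OF WX] Well_order_block_order] by blast
  then obtain p where p: "p \<in> block \<beta> b 0" and iso: "Restr X G =o Restr ?W (underS ?W p)"
    using ordLess_iff_ordIso_Restr[OF Well_order_block_order Well_order_Restr[OF WX]] Field_block_order
    by blast
  obtain f where pf: "p = (f, 0)" and f: "f \<in> fin_supp \<beta>" "supp_below \<beta> b f" "f \<noteq> (\<lambda>_. 0)"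
    using p by (cases p) (auto simp: block_iff)
  obtain c where c: "c \<in> Field \<beta>" "f c \<noteq> 0" "\<And>y. (c, y) \<in> \<beta> \<Longrightarrow> y \<noteq> c \<Longrightarrow> f y = 0"
    using fin_supp_greatest_nonzero[OF Well_order_Linear_order[OF WO] f(1) f(3)] by blast
  have "(Some c, b) \<in> osucc \<beta>" "Some c \<noteq> b" using f(2) c(2) unfolding supp_below_def by auto
  then have "block_order \<beta> (Some c) (f c) \<le>o Restr X G" by (rule IH)
  also have "Restr X G =o Restr ?W (underS ?W p)" by (rule iso)
  also have "Restr ?W (underS ?W p) <o block_order \<beta> (Some c) (f c)"
    using block_order_segment_ordLess[OF p[unfolded pf] c(1,3)] unfolding pf .
  finally show False using ordLess_irreflexive by blast
qed

theorem block_order_ordLeq_if_split_rk_ge: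
  assumes WX: "Well_order X"
  shows "p \<in> Field (rank_index \<beta>) \<Longrightarrow> G \<subseteq> Field X \<Longrightarrow> split_rk_ge X (rank_index \<beta>) p G \<Longrightarrow>
    block_order \<beta> (snd p) (fst p) \<le>o Restr X G"
proof (induction p arbitrary: G rule: wf_induct_rule[OF Well_order_wf[OF Well_order_rank_index[OF WO]]])
  case (1 p)
  obtain k b where p: "p = (k, b)" by force
  have b: "b \<in> Field (osucc \<beta>)" using "1.prems"(1) p by (auto simp: Field_rank_index)
  note WR = Well_order_rank_index[OF WO]
  show ?case
  proof (cases k)
    case (Suc k')
    have pred: "is_pred (rank_index \<beta>) (k', b) (Suc k', b)" by (rule rank_index_is_pred[OF WO b])
    then have below: "((k', b), p) \<in> rank_index \<beta> - Id" using p Suc unfolding is_pred_def by auto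
    have kb: "(k', b) \<in> Field (rank_index \<beta>)" using b by (simp add: Field_rank_index)
    obtain y where y: "y \<in> G" "split_rk_ge X (rank_index \<beta>) (k', b) (part_below X G y)"
      "split_rk_ge X (rank_index \<beta>) (k', b) (part_above X G y)"
      using "1.prems"(3) p Suc split_rk_ge_succ[OF WR pred, of X G] by auto
    have parts: "part_below X G y \<subseteq> Field X" "part_above X G y \<subseteq> Field X"
      using "1.prems"(2) unfolding part_below_def part_above_def by auto
    show ?thesis
      using block_order_Suc_ordLeq[OF WX "1.prems"(2) y(1)] "1.IH"[OF below kb parts(1) y(2)]
        "1.IH"[OF below kb parts(2) y(3)] p Suc by simp
  next
    case 0
    have "block_order \<beta> (Some c) n \<le>o Restr X G" if cb: "(Some c, b) \<in> osucc \<beta>" "Some c \<noteq> b" for c n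
    proof -
      have below: "((n, Some c), p) \<in> rank_index \<beta> - Id"
        using cb b p 0 FieldI1[OF cb(1)] by (auto simp: rank_index_iff)
      then have "split_rk_ge X (rank_index \<beta>) (n, Some c) G"
        using "1.prems"(3) p 0 split_rk_ge_limit[OF WR rank_index_no_pred[OF b], of X G] by auto
      then show ?thesis
        using "1.IH"[OF below _ "1.prems"(2)] FieldI1[OF cb(1)] by (auto simp: Field_rank_index)
    qed
    then show ?thesis using block_order_limit_ordLeq[OF WX "1.prems"(2)] p 0 by simp
  qed
qed

end

section \<open>Comparing index orders\<close>

lemma embed_osucc_extend:
  assumes WO: "Well_order r" "Well_order R" and M: "embed r R M"
    and img: "M ` Field r = underS R t" and t: "t \<in> Field R"
  shows "embed (osucc r) R (case_option t M)" and "case_option t M ` Field (osucc r) = under R t"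
proof -
  have LR: "Linear_order R" using Well_order_Linear_order[OF WO(2)] .
  have below_t: "(M x, t) \<in> R" "M x \<noteq> t" if "x \<in> Field r" for x
    using img that unfolding underS_def by blast+
  show image: "case_option t M ` Field (osucc r) = under R t"
    using img Linear_order_refl[OF LR t]
    by (auto simp: Field_osucc image_image under_def underS_def)
  have "compat (osucc r) R (case_option t M)"
    unfolding compat_def
  proof (clarify)
    fix u v assume "(u, v) \<in> osucc r"
    then show "(case_option t M u, case_option t M v) \<in> R"
      using embed_compat[OF M] below_t Linear_order_refl[OF LR t]
      by (cases u; cases v) (auto simp: compat_def)
  qed
  moreover have "inj_on (case_option t M) (Field (osucc r))"
    using embed_inj_on[OF WO(1) M] below_t by (auto simp: inj_on_def Field_osucc)
  moreover have "wo_rel.ofilter R (under R t)"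
    using wo_rel.under_ofilter[of R t] WO(2) by (simp add: wo_rel_def)
  ultimately show "embed (osucc r) R (case_option t M)"
    using embed_iff_compat_inj_on_ofilter[OF Well_order_osucc[OF WO(1)] WO(2)] image by simp
qed

text \<open>\<open>\<omega> \<cdot> \<beta> + k\<close> is the initial segment of \<open>rank_index \<beta>\<close> below \<open>(k, None)\<close>.\<close>
lemma embed_rank_index:
  fixes \<beta> :: "'b rel"
  assumes WO: "Well_order \<beta>"
  defines "M \<equiv> case_sum (\<lambda>(n, x). (n, Some x)) (\<lambda>i. (i, None))"
  shows "embed (osum (oprod natLeq \<beta>) (natLeq_on k)) (rank_index \<beta>) M"
    and "M ` Field (osum (oprod natLeq \<beta>) (natLeq_on k)) = underS (rank_index \<beta>) (k, None)"
proof -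
  let ?\<tau> = "osum (oprod natLeq \<beta>) (natLeq_on k)"
  have F\<tau>: "Field ?\<tau> = Inl ` (UNIV \<times> Field \<beta>) \<union> Inr ` {i. i < k}"
    using Field_oprod[OF natLeq_Linear_order, of \<beta>] by (simp add: Field_osum Field_natLeq Field_natLeq_on)
  show image: "M ` Field ?\<tau> = underS (rank_index \<beta>) (k, None)"
  proof
    show "M ` Field ?\<tau> \<subseteq> underS (rank_index \<beta>) (k, None)"
      unfolding F\<tau> underS_def M_def by (auto simp: rank_index_iff Field_osucc)
    show "underS (rank_index \<beta>) (k, None) \<subseteq> M ` Field ?\<tau>"
    proof
      fix q assume q: "q \<in> underS (rank_index \<beta>) (k, None)"
      obtain n b where nb: "q = (n, b)" by force
      show "q \<in> M ` Field ?\<tau>"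
      proof (cases b)
        case None
        then have "q = M (Inr n)" "n < k" using q nb unfolding M_def underS_def by (auto simp: rank_index_iff)
        then show ?thesis unfolding F\<tau> by auto
      next
        case (Some x)
        then have "q = M (Inl (n, x))" "x \<in> Field \<beta>"
          using q nb unfolding M_def underS_def by (auto simp: rank_index_iff Field_osucc)
        then show ?thesis unfolding F\<tau> by auto
      qed
    qed
  qed
  have "compat ?\<tau> (rank_index \<beta>) M"
    unfolding compat_def
  proof (clarify)
    fix u v assume "(u, v) \<in> ?\<tau>"
    then show "(M u, M v) \<in> rank_index \<beta>"
      unfolding M_def
      using Field_oprod[OF natLeq_Linear_order, of \<beta>]
      by (cases u; cases v) (auto simp: rank_index_iff Field_osucc oprod_iff natLeq_iff Field_natLeq Field_natLeq_on)
  qed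
  moreover have "inj_on M (Field ?\<tau>)" unfolding F\<tau> M_def by (auto simp: inj_on_def)
  moreover have "wo_rel.ofilter (rank_index \<beta>) (underS (rank_index \<beta>) (k, None))"
    using wo_rel.underS_ofilter Well_order_rank_index[OF WO] by (simp add: wo_rel_def)
  ultimately show "embed ?\<tau> (rank_index \<beta>) M"
    using embed_iff_compat_inj_on_ofilter[OF Well_order_osum[OF Well_order_oprod[OF natLeq_Well_order WO]
          natLeq_on_Well_order] Well_order_rank_index[OF WO]] image
    by simp
qed

lemma split_rk_ge_omega_times_plus:
  fixes \<beta> :: "'b rel" and k :: nat
  assumes WO: "Well_order \<beta>"
  defines "\<tau> \<equiv> osum (oprod natLeq \<beta>) (natLeq_on k)"
  shows "split_rk_ge X (osucc \<tau>) None G \<longleftrightarrow> split_rk_ge X (rank_index \<beta>) (k, None) G"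
    and "split_rk_ge X (osucc (osucc \<tau>)) None G \<longleftrightarrow> split_rk_ge X (rank_index \<beta>) (Suc k, None) G"
proof -
  have WO\<tau>: "Well_order \<tau>" unfolding \<tau>_def
    by (rule Well_order_osum[OF Well_order_oprod[OF natLeq_Well_order WO] natLeq_on_Well_order])
  note WR = Well_order_rank_index[OF WO]
  have k: "(k, None) \<in> Field (rank_index \<beta>)" "(Suc k, None) \<in> Field (rank_index \<beta>)"
    by (auto simp: Field_rank_index Field_osucc)
  note M = embed_rank_index[OF WO, of k, folded \<tau>_def]
  note M1 = embed_osucc_extend[OF WO\<tau> WR M k(1)]
  have "under (rank_index \<beta>) (k, None) = underS (rank_index \<beta>) (Suc k, None)"
    unfolding underS_def under_def by (auto simp: rank_index_iff)
  note M2 = embed_osucc_extend[OF Well_order_osucc[OF WO\<tau>] WR M1(1) M1(2)[unfolded this] k(2)]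
  show "split_rk_ge X (osucc \<tau>) None G \<longleftrightarrow> split_rk_ge X (rank_index \<beta>) (k, None) G"
    using split_rk_ge_embed_index[OF Well_order_osucc[OF WO\<tau>] WR M1(1), where a = None]
    by (simp add: Field_osucc)
  show "split_rk_ge X (osucc (osucc \<tau>)) None G \<longleftrightarrow> split_rk_ge X (rank_index \<beta>) (Suc k, None) G"
    using split_rk_ge_embed_index[OF Well_order_osucc[OF Well_order_osucc[OF WO\<tau>]] WR M2(1), where a = None]
    by (simp add: Field_osucc)
qed

lemma split_rk_ge_ordLess:
  assumes less: "\<tau> <o \<gamma>" and split: "split_rk_ge X (osucc \<gamma>) None G"
  shows "split_rk_ge X (osucc (osucc \<tau>)) None G"
proof -
  have WO: "Well_order \<tau>" "Well_order \<gamma>" using less unfolding ordLess_def by auto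
  obtain H where H: "embed (osucc (osucc \<tau>)) (osucc \<gamma>) H"
    using osucc_ordLeq_osucc[OF ordLess_imp_osucc_ordLeq[OF less]] unfolding ordLeq_def by blast
  have "H None \<in> Field (osucc \<gamma>)" using embed_in_Field[OF H] by (simp add: Field_osucc)
  then have "(H None, None) \<in> osucc \<gamma>" by (cases "H None") (auto simp: Field_osucc)
  then have "split_rk_ge X (osucc \<gamma>) (H None) G"
    using split_rk_ge_antimono[OF Well_order_osucc[OF WO(2)] split] by blast
  moreover have "None \<in> Field (osucc (osucc \<tau>))" by (simp add: Field_osucc)
  ultimately show ?thesis
    using split_rk_ge_embed_index[OF Well_order_osucc[OF Well_order_osucc[OF WO(1)]] Well_order_osucc[OF WO(2)] H]
    by blast
qed

section \<open>Cantor normal forms\<close>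

lemma Field_oprod_oexp_omega: "Field (oprod (oexp_omega \<beta>) s) = fin_supp \<beta> \<times> Field s"
proof
  show "fin_supp \<beta> \<times> Field s \<subseteq> Field (oprod (oexp_omega \<beta>) s)"
  proof clarify
    fix g m assume "g \<in> fin_supp \<beta>" "m \<in> Field s"
    then have "((g, m), (g, m)) \<in> oprod (oexp_omega \<beta>) s"
      by (simp add: oprod_iff oexp_omega_iff Field_oexp_omega)
    then show "(g, m) \<in> Field (oprod (oexp_omega \<beta>) s)" by (rule FieldI1)
  qed
  have "Field (oprod r s) \<subseteq> Field r \<times> Field s" for r :: "'c rel"
    unfolding Field_def oprod_def by auto
  then show "Field (oprod (oexp_omega \<beta>) s) \<subseteq> fin_supp \<beta> \<times> Field s"
    unfolding Field_oexp_omega[symmetric] by blast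
qed

lemma cnf_iff:
  "((j, (g, m)), (j', (g', m'))) \<in> cnf ts \<longleftrightarrow> j < length ts \<and> j' < length ts \<and>
    g \<in> fin_supp (fst (ts ! j)) \<and> m < snd (ts ! j) \<and> g' \<in> fin_supp (fst (ts ! j')) \<and> m' < snd (ts ! j') \<and>
    (j < j' \<or> (j = j' \<and> (m < m' \<or> (m = m' \<and> (g, g') \<in> oexp_omega (fst (ts ! j))))))"
proof (cases "j < length ts \<and> j' < length ts")
  case True
  then show ?thesis
    by (auto simp: cnf_def osum_list_def case_prod_beta oprod_iff Field_oexp_omega Field_natLeq_on
        Field_oprod_oexp_omega)
qed (auto simp: cnf_def osum_list_def)

lemma Field_cnf:
  assumes "u \<in> Field (cnf ts)"
  obtains j g m where "u = (j, (g, m))" "j < length ts" "g \<in> fin_supp (fst (ts ! j))" "m < snd (ts ! j)"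
proof -
  obtain v where "(u, v) \<in> cnf ts \<or> (v, u) \<in> cnf ts" using assms unfolding Field_def by blast
  then show ?thesis using that by (cases u; cases v) (auto simp: cnf_iff)
qed

lemma Well_order_oexp_omega_of_cnf:
  assumes WO: "Well_order (cnf ts)" and ne: "ts \<noteq> []"
    and LO: "Linear_order (fst (ts ! 0))" and c: "1 \<le> snd (ts ! 0)"
  shows "Well_order (oexp_omega (fst (ts ! 0)))"
  unfolding well_order_on_def
proof
  show "Linear_order (oexp_omega (fst (ts ! 0)))" by (rule Linear_order_oexp_omega[OF LO])
  have "oexp_omega (fst (ts ! 0)) - Id \<subseteq> inv_image (cnf ts - Id) (\<lambda>g. (0, (g, 0)))"
    using ne c by (auto simp: cnf_iff oexp_omega_iff)
  then show "wf (oexp_omega (fst (ts ! 0)) - Id)"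
    by (rule wf_subset[OF wf_inv_image[OF Well_order_wf[OF WO]]])
qed

lemma finite_cnf_if_leading_exponent_empty:
  assumes ne: "ts \<noteq> []"
    and dec: "\<forall>i j. i < j \<and> j < length ts \<longrightarrow> (fst (ts ! j), fst (ts ! i)) \<in> ordLess"
    and empty: "Field (fst (ts ! 0)) = {}"
  shows "finite (Field (cnf ts))"
proof -
  have "\<not> 1 < length ts"
  proof
    assume "1 < length ts"
    then have less: "fst (ts ! 1) <o fst (ts ! 0)" using dec by auto
    then have "Well_order (fst (ts ! 0))" "Well_order (fst (ts ! 1))" unfolding ordLess_def by auto
    then show False using ordLess_iff_ordIso_Restr less empty by blast
  qed
  then have "length ts = 1" using ne by (cases ts) auto
  moreover have "fin_supp (fst (ts ! 0)) = {\<lambda>_. 0}" using empty fin_supp_zero unfolding fin_supp_def by auto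
  ultimately have "Field (cnf ts) \<subseteq> (\<lambda>m. (0, ((\<lambda>_. 0), m))) ` {m. m < snd (ts ! 0)}"
    by (auto elim!: Field_cnf)
  then show ?thesis by (rule finite_subset) simp
qed

lemma oexp_omega_less_at_top:
  assumes "f \<in> fin_supp \<beta>" "g \<in> fin_supp \<beta>" "d \<in> Field \<beta>" "f d < g d"
    and "\<And>y. (d, y) \<in> \<beta> \<Longrightarrow> y \<noteq> d \<Longrightarrow> f y = g y"
  shows "(f, g) \<in> oexp_omega \<beta> \<and> f \<noteq> g"
  using assms unfolding oexp_omega_iff by auto

definition transport :: "('c \<Rightarrow> 'b) \<Rightarrow> 'c set \<Rightarrow> ('c \<Rightarrow> nat) \<Rightarrow> 'b \<Rightarrow> nat" where
  "transport \<psi> A g y = (if y \<in> \<psi> ` A then g (inv_into A \<psi> y) else 0)"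

definition embeds_below :: "'c rel \<Rightarrow> 'b rel \<Rightarrow> 'b \<Rightarrow> ('c \<Rightarrow> 'b) \<Rightarrow> bool" where
  "embeds_below \<beta>' \<beta> d \<psi> \<longleftrightarrow> inj_on \<psi> (Field \<beta>') \<and>
     (\<forall>x\<in>Field \<beta>'. \<forall>y\<in>Field \<beta>'. (\<psi> x, \<psi> y) \<in> \<beta> \<longleftrightarrow> (x, y) \<in> \<beta>') \<and>
     (\<forall>x\<in>Field \<beta>'. (\<psi> x, d) \<in> \<beta> \<and> \<psi> x \<noteq> d)"

lemma embeds_belowD:
  assumes "embeds_below \<beta>' \<beta> d \<psi>"
  shows "inj_on \<psi> (Field \<beta>')"
    and "x \<in> Field \<beta>' \<Longrightarrow> y \<in> Field \<beta>' \<Longrightarrow> (\<psi> x, \<psi> y) \<in> \<beta> \<longleftrightarrow> (x, y) \<in> \<beta>'"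
    and "x \<in> Field \<beta>' \<Longrightarrow> (\<psi> x, d) \<in> \<beta> \<and> \<psi> x \<noteq> d"
  using assms unfolding embeds_below_def by auto

text \<open>An order embedding of \<open>\<beta>'\<close> into \<open>\<beta>\<close> strictly below \<open>d\<close> transports \<open>\<omega>\<^bsup>\<beta>'\<^esup>\<close> into
  \<open>\<omega>\<^bsup>\<beta>\<^esup>\<close>; the coordinate \<open>d\<close> stays free and is compared first.\<close>
context
  fixes \<psi> :: "'c \<Rightarrow> 'b" and \<beta>' :: "'c rel" and \<beta> :: "'b rel" and d :: 'b
  assumes emb: "embeds_below \<beta>' \<beta> d \<psi>" and LO: "Linear_order \<beta>" and d: "d \<in> Field \<beta>"
begin

lemma transport_apply: "x \<in> Field \<beta>' \<Longrightarrow> transport \<psi> (Field \<beta>') g (\<psi> x) = g x"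
  unfolding transport_def using inv_into_f_f[OF embeds_belowD(1)[OF emb]] by auto

lemma transport_upd_above: "(d, y) \<in> \<beta> \<Longrightarrow> y \<noteq> d \<Longrightarrow> ((transport \<psi> (Field \<beta>') g)(d := v)) y = 0"
  unfolding transport_def using embeds_belowD(3)[OF emb] Linear_order_antisym[OF LO] by fastforce

lemma fin_supp_transport_upd:
  assumes g: "g \<in> fin_supp \<beta>'"
  shows "(transport \<psi> (Field \<beta>') g)(d := v) \<in> fin_supp \<beta>"
proof (rule fin_suppI)
  have "{y. ((transport \<psi> (Field \<beta>') g)(d := v)) y \<noteq> 0} \<subseteq> insert d (\<psi> ` {x. g x \<noteq> 0})"
  proof
    fix y assume "y \<in> {y. ((transport \<psi> (Field \<beta>') g)(d := v)) y \<noteq> 0}"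
    then have y: "((transport \<psi> (Field \<beta>') g)(d := v)) y \<noteq> 0" by simp
    show "y \<in> insert d (\<psi> ` {x. g x \<noteq> 0})"
    proof (cases "y = d")
      case False
      then obtain x where "x \<in> Field \<beta>'" "y = \<psi> x" using y by (auto simp: transport_def split: if_splits)
      then show ?thesis using y False transport_apply by auto
    qed simp
  qed
  then show "finite {y. ((transport \<psi> (Field \<beta>') g)(d := v)) y \<noteq> 0}"
    using fin_supp_finite[OF g] finite_subset by blast
  show "((transport \<psi> (Field \<beta>') g)(d := v)) y \<noteq> 0 \<Longrightarrow> y \<in> Field \<beta>" for y
    using d embeds_belowD(3)[OF emb] FieldI1 unfolding transport_def by (fastforce split: if_splits)
qed

lemma transport_upd_mono:
  assumes gg': "(g, g') \<in> oexp_omega \<beta>'" "g \<noteq> g'"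
  shows "((transport \<psi> (Field \<beta>') g)(d := v), (transport \<psi> (Field \<beta>') g')(d := v)) \<in> oexp_omega \<beta> \<and>
    (transport \<psi> (Field \<beta>') g)(d := v) \<noteq> (transport \<psi> (Field \<beta>') g')(d := v)"
proof -
  obtain x where x: "x \<in> Field \<beta>'" "g x < g' x" "\<forall>y\<in>Field \<beta>'. (x, y) \<in> \<beta>' \<and> y \<noteq> x \<longrightarrow> g y = g' y"
    and fs: "g \<in> fin_supp \<beta>'" "g' \<in> fin_supp \<beta>'" using gg' unfolding oexp_omega_iff by blast
  let ?T = "\<lambda>g. (transport \<psi> (Field \<beta>') g)(d := v)"
  have at_x: "?T g (\<psi> x) < ?T g' (\<psi> x)" using x(1,2) embeds_belowD(3)[OF emb] transport_apply by auto
  have "?T g y = ?T g' y" if y: "(\<psi> x, y) \<in> \<beta>" "y \<noteq> \<psi> x" for y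
  proof (cases "y \<in> \<psi> ` Field \<beta>'")
    case True
    then obtain z where z: "z \<in> Field \<beta>'" "y = \<psi> z" by blast
    then have "(x, z) \<in> \<beta>'" "z \<noteq> x" using y embeds_belowD(2)[OF emb x(1) z(1)] by auto
    then show ?thesis using x(3) z embeds_belowD(3)[OF emb] transport_apply by auto
  qed (auto simp: transport_def)
  then show ?thesis
    using at_x x(1) embeds_belowD(3)[OF emb] fin_supp_transport_upd fs FieldI1 unfolding oexp_omega_iff
    by (metis (no_types, lifting) less_irrefl)
qed

end

text \<open>Bumping the least point \<open>b\<^sub>0\<close> embeds \<open>\<omega>\<^bsup>\<beta>\<^esup>\<close> into its nonzero part.\<close>
context
  fixes \<beta> :: "'b rel" and b\<^sub>0 :: 'b
  assumes LO: "Linear_order \<beta>" and b\<^sub>0: "b\<^sub>0 \<in> Field \<beta>" "\<And>x. x \<in> Field \<beta> \<Longrightarrow> (b\<^sub>0, x) \<in> \<beta>"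
begin

lemma fin_supp_bump: "g \<in> fin_supp \<beta> \<Longrightarrow> g(b\<^sub>0 := Suc (g b\<^sub>0)) \<in> fin_supp \<beta>"
  by (rule fin_supp_upd[OF _ b\<^sub>0(1)])

lemma bump_mono:
  assumes gg': "(g, g') \<in> oexp_omega \<beta>" "g \<noteq> g'"
  shows "(g(b\<^sub>0 := Suc (g b\<^sub>0)), g'(b\<^sub>0 := Suc (g' b\<^sub>0))) \<in> oexp_omega \<beta> \<and>
    g(b\<^sub>0 := Suc (g b\<^sub>0)) \<noteq> g'(b\<^sub>0 := Suc (g' b\<^sub>0))"
proof -
  obtain x where x: "x \<in> Field \<beta>" "g x < g' x" "\<forall>y\<in>Field \<beta>. (x, y) \<in> \<beta> \<and> y \<noteq> x \<longrightarrow> g y = g' y"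
    and fs: "g \<in> fin_supp \<beta>" "g' \<in> fin_supp \<beta>" using gg' unfolding oexp_omega_iff by blast
  have "y \<noteq> b\<^sub>0" if "(x, y) \<in> \<beta>" "y \<noteq> x" for y
    using that b\<^sub>0(2)[OF x(1)] Linear_order_antisym[OF LO] by blast
  then have "\<forall>y\<in>Field \<beta>. (x, y) \<in> \<beta> \<and> y \<noteq> x \<longrightarrow> (g(b\<^sub>0 := Suc (g b\<^sub>0))) y = (g'(b\<^sub>0 := Suc (g' b\<^sub>0))) y"
    using x(3) by auto
  moreover have "(g(b\<^sub>0 := Suc (g b\<^sub>0))) x < (g'(b\<^sub>0 := Suc (g' b\<^sub>0))) x"
    using x(2) by (cases "x = b\<^sub>0") auto
  ultimately have "(g(b\<^sub>0 := Suc (g b\<^sub>0)), g'(b\<^sub>0 := Suc (g' b\<^sub>0))) \<in> oexp_omega \<beta>"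
    using x(1) fin_supp_bump[OF fs(1)] fin_supp_bump[OF fs(2)] unfolding oexp_omega_iff by blast
  then show ?thesis using \<open>(g(b\<^sub>0 := Suc (g b\<^sub>0))) x < _\<close> by (metis less_irrefl)
qed

end

lemma smaller_exponents_below:
  assumes WO: "Well_order \<beta>" and ne: "Field \<beta> \<noteq> {}" and fin: "finite J"
    and less: "\<And>j. j \<in> J \<Longrightarrow> \<beta>s j <o \<beta>"
  shows "\<exists>d \<Psi>. d \<in> Field \<beta> \<and> (\<forall>j\<in>J. embeds_below (\<beta>s j) \<beta> d (\<Psi> j))"
proof -
  have LO: "Linear_order \<beta>" using Well_order_Linear_order[OF WO] .
  have "\<exists>a \<psi>. a \<in> Field \<beta> \<and> iso (\<beta>s j) (Restr \<beta> (underS \<beta> a)) \<psi>" if "j \<in> J" for j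
    using less[OF that] ordLess_iff_ordIso_Restr[OF WO] unfolding ordLess_def ordIso_def by blast
  then obtain A \<Psi> where A: "\<And>j. j \<in> J \<Longrightarrow> A j \<in> Field \<beta>"
    and iso: "\<And>j. j \<in> J \<Longrightarrow> iso (\<beta>s j) (Restr \<beta> (underS \<beta> (A j))) (\<Psi> j)"
    by metis
  obtain e where e: "e \<in> Field \<beta>" using ne by blast
  obtain d where d: "d \<in> insert e (A ` J)" "\<And>y. y \<in> insert e (A ` J) \<Longrightarrow> (y, d) \<in> \<beta>"
    using Linear_order_finite_max[OF LO, of "insert e (A ` J)"] fin e A by auto
  have seg: "underS \<beta> a \<subseteq> Field \<beta>" for a by (auto simp: underS_def intro: FieldI1)
  have "embeds_below (\<beta>s j) \<beta> d (\<Psi> j)" if j: "j \<in> J" for j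
  proof -
    have img: "\<Psi> j ` Field (\<beta>s j) = underS \<beta> (A j)"
      using iso_Field[OF iso[OF j]] Field_Restr_Well_order[OF WO seg] by simp
    have "(\<Psi> j x, d) \<in> \<beta> \<and> \<Psi> j x \<noteq> d" if "x \<in> Field (\<beta>s j)" for x
    proof -
      have "(\<Psi> j x, A j) \<in> \<beta>" "\<Psi> j x \<noteq> A j" using img that unfolding underS_def by auto
      moreover have "(A j, d) \<in> \<beta>" using d(2) j by blast
      ultimately show ?thesis using Linear_order_trans[OF LO] Linear_order_antisym[OF LO] by metis
    qed
    then show ?thesis
      using iso_imp_inj_on[OF iso[OF j]] iso_iff2[THEN iffD1, OF iso[OF j]] img
      unfolding embeds_below_def by auto
  qed
  moreover have "d \<in> Field \<beta>" using d(1) e A by auto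
  ultimately show ?thesis by blast
qed

text \<open>The leading term \<open>\<omega>\<^bsup>\<beta>\<^sub>1\<^esup> \<cdot> c\<^sub>1\<close> goes to the levels below \<open>c\<^sub>1\<close>, bumped to avoid the excluded
  least element; the term \<open>j > 0\<close> goes to level \<open>c\<^sub>1\<close>, transported below \<open>d\<close> and tagged at \<open>d\<close>
  with \<open>j \<cdot> N + m\<close>.\<close>
definition cnf_to_block ::
    "'b \<Rightarrow> 'b \<Rightarrow> (nat \<Rightarrow> 'b \<Rightarrow> 'b) \<Rightarrow> nat \<Rightarrow> ('b rel \<times> nat) list \<Rightarrow>
     nat \<times> ('b \<Rightarrow> nat) \<times> nat \<Rightarrow> ('b \<Rightarrow> nat) \<times> nat" where
  "cnf_to_block b\<^sub>0 d \<Psi> N ts = (\<lambda>(j, g, m). if j = 0 then (g(b\<^sub>0 := Suc (g b\<^sub>0)), m)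
     else ((transport (\<Psi> j) (Field (fst (ts ! j))) g)(d := j * N + m), snd (ts ! 0)))"

context
  fixes ts :: "('b rel \<times> nat) list" and b\<^sub>0 d :: 'b and \<Psi> :: "nat \<Rightarrow> 'b \<Rightarrow> 'b" and N :: nat
  assumes LO: "Linear_order (fst (ts ! 0))"
    and b\<^sub>0: "b\<^sub>0 \<in> Field (fst (ts ! 0))" "\<And>x. x \<in> Field (fst (ts ! 0)) \<Longrightarrow> (b\<^sub>0, x) \<in> fst (ts ! 0)"
    and d: "d \<in> Field (fst (ts ! 0))"
    and \<Psi>: "\<And>j. 0 < j \<Longrightarrow> j < length ts \<Longrightarrow> embeds_below (fst (ts ! j)) (fst (ts ! 0)) d (\<Psi> j)"
    and N: "\<And>j. j < length ts \<Longrightarrow> snd (ts ! j) < N"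
begin

abbreviation (input) tail_term where
  "tail_term j g m \<equiv> (transport (\<Psi> j) (Field (fst (ts ! j))) g)(d := j * N + m)"

lemma tail_term_props:
  assumes j: "0 < j" "j < length ts"
  shows "g \<in> fin_supp (fst (ts ! j)) \<Longrightarrow> tail_term j g m \<in> fin_supp (fst (ts ! 0))"
    and "(d, y) \<in> fst (ts ! 0) \<Longrightarrow> y \<noteq> d \<Longrightarrow> tail_term j g m y = 0"
    and "(g, g') \<in> oexp_omega (fst (ts ! j)) \<Longrightarrow> g \<noteq> g' \<Longrightarrow>
      (tail_term j g m, tail_term j g' m) \<in> oexp_omega (fst (ts ! 0)) \<and> tail_term j g m \<noteq> tail_term j g' m"
proof -
  note facts = \<Psi>[OF j] LO d
  show "g \<in> fin_supp (fst (ts ! j)) \<Longrightarrow> tail_term j g m \<in> fin_supp (fst (ts ! 0))"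
    by (rule fin_supp_transport_upd[OF facts])
  show "(d, y) \<in> fst (ts ! 0) \<Longrightarrow> y \<noteq> d \<Longrightarrow> tail_term j g m y = 0"
    by (rule transport_upd_above[OF facts])
  show "(g, g') \<in> oexp_omega (fst (ts ! j)) \<Longrightarrow> g \<noteq> g' \<Longrightarrow>
      (tail_term j g m, tail_term j g' m) \<in> oexp_omega (fst (ts ! 0)) \<and> tail_term j g m \<noteq> tail_term j g' m"
    by (rule transport_upd_mono[OF facts])
qed

lemma tail_term_less:
  assumes "0 < j" "j < length ts" "0 < j'" "j' < length ts" "j * N + m < j' * N + m'"
    "g \<in> fin_supp (fst (ts ! j))" "g' \<in> fin_supp (fst (ts ! j'))"
  shows "(tail_term j g m, tail_term j' g' m') \<in> oexp_omega (fst (ts ! 0)) \<and> tail_term j g m \<noteq> tail_term j' g' m'"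
  using assms tail_term_props d by (intro oexp_omega_less_at_top) auto

lemma cnf_to_block_in_block:
  assumes u: "u \<in> Field (cnf ts)" and K: "snd (ts ! 0) < 2 ^ K"
  shows "cnf_to_block b\<^sub>0 d \<Psi> N ts u \<in> block (fst (ts ! 0)) None K"
proof -
  obtain j g m where jgm: "u = (j, (g, m))" "j < length ts" "g \<in> fin_supp (fst (ts ! j))" "m < snd (ts ! j)"
    using Field_cnf[OF u] by blast
  have supp: "supp_below (fst (ts ! 0)) None f" if "f \<in> fin_supp (fst (ts ! 0))" for f
    using fin_supp_Field[OF that] by (simp add: supp_below_None)
  show ?thesis
  proof (cases "j = 0")
    case True
    then show ?thesis using jgm fin_supp_bump[OF LO b\<^sub>0] supp K
      by (auto simp: cnf_to_block_def block_iff dest: fun_cong[of _ _ b\<^sub>0])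
  next
    case False
    have "0 < N" using N[of 0] jgm(2) by (cases ts) auto
    then show ?thesis using False jgm tail_term_props(1)[of j g] supp K
      by (auto simp: cnf_to_block_def block_iff dest: fun_cong[of _ _ d])
  qed
qed

lemma cnf_to_block_below_top:
  assumes u: "u \<in> Field (cnf ts)"
  defines "w \<equiv> ((\<lambda>_. 0)(d := length ts * N), snd (ts ! 0))"
  shows "(cnf_to_block b\<^sub>0 d \<Psi> N ts u, w) \<in> oexp_omega_succ (fst (ts ! 0)) \<and> cnf_to_block b\<^sub>0 d \<Psi> N ts u \<noteq> w"
proof -
  obtain j g m where jgm: "u = (j, (g, m))" "j < length ts" "g \<in> fin_supp (fst (ts ! j))" "m < snd (ts ! j)"
    using Field_cnf[OF u] by blast
  have top: "(\<lambda>_. 0)(d := length ts * N) \<in> fin_supp (fst (ts ! 0))" by (rule fin_supp_upd[OF fin_supp_zero d])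
  show ?thesis
  proof (cases "j = 0")
    case True
    then show ?thesis using jgm fin_supp_bump[OF LO b\<^sub>0] top
      by (auto simp: cnf_to_block_def w_def oexp_omega_succ_iff)
  next
    case False
    have "j * N + m < j * N + N" using jgm N[of j] by simp
    also have "\<dots> \<le> length ts * N" using jgm(2) mult_le_mono1[of "Suc j" "length ts" N] by simp
    finally have "(tail_term j g m, (\<lambda>_. 0)(d := length ts * N)) \<in> oexp_omega (fst (ts ! 0))
        \<and> tail_term j g m \<noteq> (\<lambda>_. 0)(d := length ts * N)"
      using False jgm tail_term_props[of j] top d by (intro oexp_omega_less_at_top) auto
    then show ?thesis using False jgm tail_term_props(1)[of j g] top
      by (auto simp: cnf_to_block_def w_def oexp_omega_succ_iff)
  qed
qed

lemma cnf_to_block_mono: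
  assumes uv: "(u, v) \<in> cnf ts" "u \<noteq> v"
  shows "(cnf_to_block b\<^sub>0 d \<Psi> N ts u, cnf_to_block b\<^sub>0 d \<Psi> N ts v) \<in> oexp_omega_succ (fst (ts ! 0)) \<and>
    cnf_to_block b\<^sub>0 d \<Psi> N ts u \<noteq> cnf_to_block b\<^sub>0 d \<Psi> N ts v"
proof -
  obtain j g m where u: "u = (j, (g, m))" "j < length ts" "g \<in> fin_supp (fst (ts ! j))" "m < snd (ts ! j)"
    using Field_cnf[OF FieldI1[OF uv(1)]] by blast
  obtain j' g' m' where v: "v = (j', (g', m'))" "j' < length ts" "g' \<in> fin_supp (fst (ts ! j'))" "m' < snd (ts ! j')"
    using Field_cnf[OF FieldI2[OF uv(1)]] by blast
  have rel: "j < j' \<or> (j = j' \<and> (m < m' \<or> (m = m' \<and> (g, g') \<in> oexp_omega (fst (ts ! j)) \<and> g \<noteq> g')))"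
    using uv u v by (auto simp: cnf_iff)
  consider (first) "j = 0" "j' = 0" | (first_tail) "j = 0" "j' \<noteq> 0" | (tail) "j \<noteq> 0" "j' \<noteq> 0"
    using rel by fastforce
  then show ?thesis
  proof cases
    case first
    then show ?thesis using rel u v bump_mono[OF LO b\<^sub>0, of g g'] fin_supp_bump[OF LO b\<^sub>0]
      by (auto simp: cnf_to_block_def oexp_omega_succ_iff)
  next
    case first_tail
    then show ?thesis using u v fin_supp_bump[OF LO b\<^sub>0] tail_term_props(1)[of j' g']
      by (auto simp: cnf_to_block_def oexp_omega_succ_iff)
  next
    case tail
    have "(tail_term j g m, tail_term j' g' m') \<in> oexp_omega (fst (ts ! 0)) \<and> tail_term j g m \<noteq> tail_term j' g' m'"
    proof (cases "j = j' \<and> m = m'")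
      case True
      then show ?thesis using rel tail tail_term_props(3)[of j g g' m] u v by auto
    next
      case False
      have "j * N + m < j' * N + m'"
      proof (cases "j < j'")
        case True
        have "j * N + m < j * N + N" using u N[of j] by simp
        also have "\<dots> \<le> j' * N" using True mult_le_mono1[of "Suc j" j' N] by simp
        finally show ?thesis by simp
      qed (use False rel in auto)
      then show ?thesis using tail u v by (intro tail_term_less) auto
    qed
    then show ?thesis using tail u v tail_term_props(1)[of j g] tail_term_props(1)[of j' g']
      by (auto simp: cnf_to_block_def oexp_omega_succ_iff)
  qed
qed

end

theorem cnf_ordLess_block_order:
  fixes ts :: "('b rel \<times> nat) list"
  assumes WO_cnf: "Well_order (cnf ts)" and ne: "ts \<noteq> []"
    and terms: "\<forall>i < length ts. Well_order (fst (ts ! i)) \<and> 1 \<le> snd (ts ! i)"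
    and dec: "\<forall>i j. i < j \<and> j < length ts \<longrightarrow> (fst (ts ! j), fst (ts ! i)) \<in> ordLess"
    and nonempty: "Field (fst (ts ! 0)) \<noteq> {}" and K: "snd (ts ! 0) < 2 ^ K"
  shows "cnf ts <o block_order (fst (ts ! 0)) None K"
proof -
  let ?\<beta> = "fst (ts ! 0)"
  have WO: "Well_order ?\<beta>" and LO: "Linear_order ?\<beta>" using terms ne Well_order_Linear_order by auto
  have WO_exp: "Well_order (oexp_omega ?\<beta>)"
    using Well_order_oexp_omega_of_cnf[OF WO_cnf ne LO] terms ne by auto
  define b\<^sub>0 where "b\<^sub>0 = wo_rel.minim ?\<beta> (Field ?\<beta>)"
  have b\<^sub>0: "b\<^sub>0 \<in> Field ?\<beta>" "\<And>x. x \<in> Field ?\<beta> \<Longrightarrow> (b\<^sub>0, x) \<in> ?\<beta>"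
    using wo_rel.minim_inField[of ?\<beta> "Field ?\<beta>"] wo_rel.minim_least[of ?\<beta> "Field ?\<beta>"] WO nonempty
    unfolding b\<^sub>0_def wo_rel_def by auto
  let ?J = "{j. 0 < j \<and> j < length ts}"
  have fin: "finite ?J" by simp
  have less: "fst (ts ! j) <o ?\<beta>" if "j \<in> ?J" for j using dec that by auto
  obtain d \<Psi> where d: "d \<in> Field ?\<beta>" and \<Psi>: "\<forall>j\<in>?J. embeds_below (fst (ts ! j)) ?\<beta> d (\<Psi> j)"
    using smaller_exponents_below[where \<beta>s = "\<lambda>j. fst (ts ! j)", OF WO nonempty fin less] by blast
  define N where "N = Suc (\<Sum>j<length ts. snd (ts ! j))"
  have N: "snd (ts ! j) < N" if "j < length ts" for j
    using member_le_sum[of j "{..<length ts}" "\<lambda>j. snd (ts ! j)"] that unfolding N_def by simp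
  have \<Psi>': "\<And>j. 0 < j \<Longrightarrow> j < length ts \<Longrightarrow> embeds_below (fst (ts ! j)) ?\<beta> d (\<Psi> j)" using \<Psi> by blast
  note ctx = LO b\<^sub>0 d \<Psi>' N
  let ?w = "((\<lambda>_. 0)(d := length ts * N), snd (ts ! 0))"
  have "0 < length ts * N" using ne N[of 0] by (cases ts) auto
  then have w: "?w \<in> block ?\<beta> None K"
    using fin_supp_upd[OF fin_supp_zero d] fin_supp_Field K d
    by (auto simp: block_iff supp_below_None dest: fun_cong[of _ _ d])
  have "strict_mono_rel (cnf ts) (block_order ?\<beta> None K) (cnf_to_block b\<^sub>0 d \<Psi> N ts)"
    unfolding strict_mono_rel_def Field_block_order[OF WO WO_exp]
    using cnf_to_block_in_block[OF ctx _ K] cnf_to_block_mono[OF ctx]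
      cnf_to_block_in_block[OF ctx FieldI1 K] cnf_to_block_in_block[OF ctx FieldI2 K]
    by (auto simp: block_order_iff)
  moreover have "(cnf_to_block b\<^sub>0 d \<Psi> N ts u, ?w) \<in> block_order ?\<beta> None K \<and> cnf_to_block b\<^sub>0 d \<Psi> N ts u \<noteq> ?w"
    if "u \<in> Field (cnf ts)" for u
    using cnf_to_block_below_top[OF ctx that] cnf_to_block_in_block[OF ctx that K] w
    by (simp add: block_order_iff)
  ultimately show ?thesis
    using w by (intro strict_mono_rel_below_ordLess[OF WO_cnf Well_order_block_order[OF WO WO_exp]])
      (auto simp: Field_block_order[OF WO WO_exp])
qed

lemma cnf_leading_term_embed:
  assumes ne: "ts \<noteq> []" and k: "2 ^ k \<le> snd (ts ! 0)"
  shows "q \<in> block (fst (ts ! 0)) None k \<Longrightarrow> (0, q) \<in> Field (cnf ts)"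
    and "q \<in> block (fst (ts ! 0)) None k \<Longrightarrow> q' \<in> block (fst (ts ! 0)) None k \<Longrightarrow>
      (q, q') \<in> oexp_omega_succ (fst (ts ! 0)) \<Longrightarrow> ((0, q), (0, q')) \<in> cnf ts"
proof -
  have in_cnf: "((0, q), (0, q')) \<in> cnf ts"
    if "q \<in> block (fst (ts ! 0)) None k" "q' \<in> block (fst (ts ! 0)) None k"
      "(q, q') \<in> oexp_omega_succ (fst (ts ! 0))" for q q'
    using that ne k by (cases q; cases q') (auto simp: block_iff cnf_iff oexp_omega_succ_iff)
  show "q \<in> block (fst (ts ! 0)) None k \<Longrightarrow> (0, q) \<in> Field (cnf ts)"
    using in_cnf[of q q] FieldI1 by (cases q) (fastforce simp: block_iff oexp_omega_succ_iff oexp_omega_iff)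
  show "q \<in> block (fst (ts ! 0)) None k \<Longrightarrow> q' \<in> block (fst (ts ! 0)) None k \<Longrightarrow>
      (q, q') \<in> oexp_omega_succ (fst (ts ! 0)) \<Longrightarrow> ((0, q), (0, q')) \<in> cnf ts"
    by (rule in_cnf)
qed

theorem rk_ge_cnf_lower_bound:
  assumes WO: "Well_order A" and iso: "A =o cnf ts" and ne: "ts \<noteq> []"
    and WO0: "Well_order (fst (ts ! 0))" and k: "2 ^ k \<le> snd (ts ! 0)"
  shows "rk_ge A {} (osum (oprod natLeq (fst (ts ! 0))) (natLeq_on k))"
proof -
  let ?\<beta> = "fst (ts ! 0)"
  obtain \<psi> where \<psi>: "iso (cnf ts) A \<psi>" using ordIso_symmetric[OF iso] unfolding ordIso_def by blast
  have \<psi>_iff: "(\<psi> u, \<psi> v) \<in> A \<longleftrightarrow> (u, v) \<in> cnf ts" if "u \<in> Field (cnf ts)" "v \<in> Field (cnf ts)" for u v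
    using iso_iff2[THEN iffD1, OF \<psi>] that by blast
  have \<psi>_bij: "bij_betw \<psi> (Field (cnf ts)) (Field A)" using \<psi> unfolding iso_def by blast
  have "(k, None) \<in> Field (rank_index ?\<beta>)" by (simp add: Field_rank_index Field_osucc)
  then have "split_rk_ge (oexp_omega_succ ?\<beta>) (rank_index ?\<beta>) (k, None) (block ?\<beta> None k)"
    using split_rk_ge_block[OF WO0] by fastforce
  then have "split_rk_ge A (rank_index ?\<beta>) (k, None) (Field A)"
  proof (rule split_rk_ge_embed[OF Well_order_rank_index[OF WO0]])
    show "inj_on (\<lambda>q. \<psi> (0, q)) (block ?\<beta> None k)"
      using \<psi>_bij cnf_leading_term_embed(1)[OF ne k] unfolding bij_betw_def inj_on_def by blast
    show "(\<lambda>q. \<psi> (0, q)) ` block ?\<beta> None k \<subseteq> Field A"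
      using \<psi>_bij cnf_leading_term_embed(1)[OF ne k] unfolding bij_betw_def by blast
  qed (use \<psi>_iff cnf_leading_term_embed[OF ne k] in auto)
  then show ?thesis
    using split_rk_ge_omega_times_plus(1)[OF WO0] rk_ge_iff_split_rk_ge[OF _ Well_order_Linear_order[OF WO]]
      Well_order_osum[OF Well_order_oprod[OF natLeq_Well_order WO0] natLeq_on_Well_order]
    by blast
qed

theorem rk_ge_cnf_upper_bound:
  assumes WO: "Well_order A" and iso: "A =o cnf ts" and ne: "ts \<noteq> []"
    and terms: "\<forall>i < length ts. Well_order (fst (ts ! i)) \<and> 1 \<le> snd (ts ! i)"
    and dec: "\<forall>i j. i < j \<and> j < length ts \<longrightarrow> (fst (ts ! j), fst (ts ! i)) \<in> ordLess"
    and nonempty: "Field (fst (ts ! 0)) \<noteq> {}" and k: "snd (ts ! 0) < 2 ^ Suc k"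
    and WO\<gamma>: "Well_order \<gamma>" and rk: "rk_ge A {} \<gamma>"
  shows "\<gamma> \<le>o osum (oprod natLeq (fst (ts ! 0))) (natLeq_on k)"
proof (rule ccontr)
  let ?\<beta> = "fst (ts ! 0)" and ?\<tau> = "osum (oprod natLeq (fst (ts ! 0))) (natLeq_on k)"
  have WO0: "Well_order ?\<beta>" using terms ne by auto
  have WO_cnf: "Well_order (cnf ts)" using iso unfolding ordIso_def by blast
  have WO_exp: "Well_order (oexp_omega ?\<beta>)"
    using Well_order_oexp_omega_of_cnf[OF WO_cnf ne Well_order_Linear_order[OF WO0]] terms ne by auto
  assume "\<not> \<gamma> \<le>o ?\<tau>"
  moreover have WO\<tau>: "Well_order ?\<tau>"
    by (rule Well_order_osum[OF Well_order_oprod[OF natLeq_Well_order WO0] natLeq_on_Well_order])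
  ultimately have "?\<tau> <o \<gamma>" using not_ordLeq_iff_ordLess[OF WO\<tau> WO\<gamma>] by simp
  then have "split_rk_ge A (osucc (osucc ?\<tau>)) None (Field A)"
    using split_rk_ge_ordLess rk rk_ge_iff_split_rk_ge[OF WO\<gamma> Well_order_Linear_order[OF WO]] by simp
  then have "split_rk_ge A (rank_index ?\<beta>) (Suc k, None) (Field A)"
    unfolding split_rk_ge_omega_times_plus(2)[OF WO0] .
  then have "block_order ?\<beta> None (Suc k) \<le>o A"
    using block_order_ordLeq_if_split_rk_ge[OF WO0 WO_exp WO, of "(Suc k, None)" "Field A"]
    by (simp add: Field_rank_index Field_osucc Restr_Field)
  also have "A =o cnf ts" by (rule iso)
  also have "cnf ts <o block_order ?\<beta> None (Suc k)"
    by (rule cnf_ordLess_block_order[OF WO_cnf ne terms dec nonempty k])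
  finally show False using ordLess_irreflexive by blast
qed

lemma floor_log2_bounds:
  fixes c :: nat
  assumes "1 \<le> c"
  shows "2 ^ nat \<lfloor>log 2 (real c)\<rfloor> \<le> c" and "c < 2 ^ Suc (nat \<lfloor>log 2 (real c)\<rfloor>)"
proof -
  obtain k where k: "2 ^ k \<le> c" "c < 2 ^ (k + 1)" using ex_power_ivl1[of 2 c] assms by auto
  have "\<lfloor>log (real 2) (real c)\<rfloor> = int k" by (rule floor_log_nat_eq_if[OF k]) simp
  then show "2 ^ nat \<lfloor>log 2 (real c)\<rfloor> \<le> c" "c < 2 ^ Suc (nat \<lfloor>log 2 (real c)\<rfloor>)" using k by simp_all
qed

theorem theorem6p13:
  fixes A :: "'a rel" and ts :: "('b rel \<times> nat) list"
  assumes "Well_order A" and "countable (Field A)"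
    and "(natLeq, A) \<in> ordLeq"
    and "ts \<noteq> []"
    and "\<forall>i < length ts. Well_order (fst (ts ! i)) \<and> 1 \<le> snd (ts ! i)"
    and "\<forall>i j. i < j \<and> j < length ts \<longrightarrow> (fst (ts ! j), fst (ts ! i)) \<in> ordLess"
    and "(A, cnf ts) \<in> ordIso"
  shows "rk_ge A {} (osum (oprod natLeq (fst (hd ts))) (natLeq_on (nat \<lfloor>log 2 (real (snd (hd ts)))\<rfloor>)))
       \<and> (\<forall>\<gamma> :: 'c rel. Well_order \<gamma> \<longrightarrow> rk_ge A {} \<gamma> \<longrightarrow>
            (\<gamma>, osum (oprod natLeq (fst (hd ts))) (natLeq_on (nat \<lfloor>log 2 (real (snd (hd ts)))\<rfloor>))) \<in> ordLeq)"
proof -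
  have hd: "hd ts = ts ! 0" using assms(4) by (simp add: hd_conv_nth)
  have WO0: "Well_order (fst (ts ! 0))" and c: "1 \<le> snd (ts ! 0)" using assms(4,5) by auto
  have "infinite (Field (cnf ts))"
    using ordLeq_infinite_Field[OF ordLeq_ordIso_trans[OF assms(3,7)]] by (simp add: Field_natLeq)
  then have nonempty: "Field (fst (ts ! 0)) \<noteq> {}"
    using finite_cnf_if_leading_exponent_empty[OF assms(4,6)] by blast
  show ?thesis
    unfolding hd
    using rk_ge_cnf_lower_bound[OF assms(1,7,4) WO0 floor_log2_bounds(1)[OF c]]
      rk_ge_cnf_upper_bound[OF assms(1,7,4,5,6) nonempty floor_log2_bounds(2)[OF c]]
    by blast
qed

end
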